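(* Let $0<m\le a<n$. The $Sp(2n,\mathbb{R})$-flag domain $D_{m,a}\subset Z_m$ consisting of flags $V_1\subset V_2$ with $h|_{V_1}$ of signature $(0,m)$ and $h|_{V_2}$ of signature $(n-a,a)$ is not generically $1$-connected.
   Context: Let $\omega$ be a complex symplectic form on $\mathbb{C}^{2n}$ real on $\mathbb{R}^{2n}$, $G=Sp(2n,\mathbb{C})$, $G_0=Sp(2n,\mathbb{R})$, and $h(v,w)=\sqrt{-1}\,\omega(v,\bar w)$ the $G_0$-invariant Hermitian form of signature $(n,n)$. $Z_m$ is the $G$-flag manifold of pairs $V_1\subset V_2$ of $\omega$-isotropic subspaces with $\dim V_1=m$, $\dim V_2=n$; $D_{m,a}$ is an open $G_0$-orbit (flag domain) in $Z_m$. Generic $1$-connectivity: let $K_0\subset G_0$ be a maximal compact subgroup, $K$ its complexification; the base cycle $C_0$ is the $K_0$-orbit in $D_{m,a}$ that is a complex submanifold. For $z\in C_0$ let $Q_z\subset G$ be its isotropy group and $\mathcal{O}$ the unique open $Q_z$-orbit in $Z_m$. The flag domain is generically $1$-connected if $C_0\cap\mathcal{O}\neq\emptyset$. *)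

theory Defs
  imports "HOL-Analysis.Analysis"
begin

text \<open>The ambient space C^{2n}: vectors indexed by 'n + 'n, where CARD('n) = n.
  Index Inl i is the coordinate x_i, index Inr i is the coordinate y_i.\<close>

type_synonym 'n cvec = "complex ^ ('n + 'n)"
type_synonym 'n cmat = "complex ^ ('n + 'n) ^ ('n + 'n)"
type_synonym 'n flag = "'n cvec set \<times> 'n cvec set"

definition omega :: "'n::finite cvec \<Rightarrow> 'n cvec \<Rightarrow> complex" where
  "omega v w = (\<Sum>i\<in>UNIV. v $ Inl i * w $ Inr i - v $ Inr i * w $ Inl i)"

definition cconj :: "'n::finite cvec \<Rightarrow> 'n cvec" where
  "cconj v = (\<chi> k. cnj (v $ k))"

definition herm :: "'n::finite cvec \<Rightarrow> 'n cvec \<Rightarrow> complex" where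
  "herm v w = \<i> * omega v (cconj w)"

definition csubspace :: "'n::finite cvec set \<Rightarrow> bool" where
  "csubspace V = vec.subspace V"

definition cdim :: "'n::finite cvec set \<Rightarrow> nat" where
  "cdim V = vec.dim V"

definition isotropic :: "'n::finite cvec set \<Rightarrow> bool" where
  "isotropic V \<longleftrightarrow> (\<forall>v\<in>V. \<forall>w\<in>V. omega v w = 0)"

definition herm_signature :: "'n::finite cvec set \<Rightarrow> nat \<Rightarrow> nat \<Rightarrow> bool" where
  "herm_signature V p q \<longleftrightarrow>
     (\<exists>B. finite B \<and> vec.independent B \<and> vec.span B = V \<and>
          (\<forall>b\<in>B. \<forall>b'\<in>B. b \<noteq> b' \<longrightarrow> herm b b' = 0) \<and>
          card {b\<in>B. Re (herm b b) > 0} = p \<and>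
          card {b\<in>B. Re (herm b b) < 0} = q)"

definition Zflag :: "nat \<Rightarrow> 'n::finite flag set" where
  "Zflag m = {(V1, V2). csubspace V1 \<and> csubspace V2 \<and> V1 \<subseteq> V2 \<and>
                isotropic V1 \<and> isotropic V2 \<and>
                cdim V1 = m \<and> cdim V2 = CARD('n)}"

definition Ddom :: "nat \<Rightarrow> nat \<Rightarrow> 'n::finite flag set" where
  "Ddom m a = {(V1, V2) \<in> Zflag m.
                 herm_signature V1 0 m \<and> herm_signature V2 (CARD('n) - a) a}"

definition SpC :: "'n::finite cmat set" where
  "SpC = {g. invertible g \<and> (\<forall>v w. omega (g *v v) (g *v w) = omega v w)}"

definition SpR :: "'n::finite cmat set" where
  "SpR = {g \<in> SpC. \<forall>i j. g $ i $ j \<in> \<real>}"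

definition act :: "'n::finite cmat \<Rightarrow> 'n flag \<Rightarrow> 'n flag" where
  "act g z = ((*v) g ` fst z, (*v) g ` snd z)"

definition orbit :: "'n::finite cmat set \<Rightarrow> 'n flag \<Rightarrow> 'n flag set" where
  "orbit H z = (\<lambda>g. act g z) ` H"

definition matgroup :: "'n::finite cmat set \<Rightarrow> bool" where
  "matgroup H \<longleftrightarrow> mat 1 \<in> H \<and> (\<forall>x\<in>H. \<forall>y\<in>H. x ** y \<in> H) \<and>
                   (\<forall>x\<in>H. invertible x \<and> matrix_inv x \<in> H)"

definition max_compact_subgroup :: "'n::finite cmat set \<Rightarrow> bool" where
  "max_compact_subgroup K0 \<longleftrightarrow>
     K0 \<subseteq> SpR \<and> matgroup K0 \<and> compact K0 \<and>
     (\<forall>H. H \<subseteq> SpR \<and> matgroup H \<and> compact H \<and> K0 \<subseteq> H \<longrightarrow> H = K0)"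

primrec mpow :: "'n::finite cmat \<Rightarrow> nat \<Rightarrow> 'n cmat" where
  "mpow X 0 = mat 1"
| "mpow X (Suc k) = X ** mpow X k"

definition mexp :: "'n::finite cmat \<Rightarrow> 'n cmat" where
  "mexp X = (\<Sum>k. inverse (fact k) *\<^sub>R mpow X k)"

definition lie_algebra :: "'n::finite cmat set \<Rightarrow> 'n cmat set" where
  "lie_algebra H = {X. \<forall>t::real. mexp (t *\<^sub>R X) \<in> H}"

definition complexification :: "'n::finite cmat set \<Rightarrow> 'n cmat set" where
  "complexification K0 =
     {k ** mexp (\<chi> i j. \<i> * X $ i $ j) | k X. k \<in> K0 \<and> X \<in> lie_algebra K0}"

text \<open>Topology of Z_m = G/Q: U is open iff its preimage under each orbit map
  g \<mapsto> g.z is open in G.\<close>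
definition openZ :: "nat \<Rightarrow> 'n::finite flag set \<Rightarrow> bool" where
  "openZ m U \<longleftrightarrow> U \<subseteq> Zflag m \<and>
     (\<forall>z\<in>Zflag m. openin (top_of_set SpC) {g \<in> SpC. act g z \<in> U})"

definition isotropy :: "'n::finite flag \<Rightarrow> 'n cmat set" where
  "isotropy z = {g \<in> SpC. act g z = z}"

text \<open>Base cycle: a K_0-orbit in D that is complex, i.e. coincides with the K-orbit.\<close>
definition base_cycle :: "'n::finite cmat set \<Rightarrow> 'n flag set \<Rightarrow> 'n flag set \<Rightarrow> bool" where
  "base_cycle K0 D C0 \<longleftrightarrow>
     (\<exists>z0\<in>D. C0 = orbit K0 z0 \<and> orbit (complexification K0) z0 = orbit K0 z0)"

definition generically_1_connected :: "nat \<Rightarrow> 'n::finite flag set \<Rightarrow> bool" where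
  "generically_1_connected m D \<longleftrightarrow>
     (\<exists>K0 C0 z w. max_compact_subgroup K0 \<and> base_cycle K0 D C0 \<and> z \<in> C0 \<and>
        w \<in> Zflag m \<and> openZ m (orbit (isotropy z) w) \<and>
        C0 \<inter> orbit (isotropy z) w \<noteq> {})"

end

theory Submission
  imports Defs
begin

(*
  A maximal compact subgroup K0 of Sp(2n,R) fixes a Euclidean inner product P with
  Omega^T P^-1 Omega = P; two minimisations of strictly convex functions take the place of
  Haar measure and of the polar decomposition. Hence K0 is the centraliser of the complex
  structure J = P^-1 Omega, and its complexification contains exp(s iJ), which scales the
  -i- and i-eigenspaces of J by e^s and e^-s. On V1 of the base point h is negative
  semidefinite, and the K-orbit of the base point is its K0-orbit, so h stays nonpositive on
  exp(s iJ) V1 for all s. As h is positive definite on the i-eigenspace, V1 lies in the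
  -i-eigenspace of J, which is omega-isotropic and K0-stable: omega(V1(z), V1(z')) = 0 for all
  z, z' in the base cycle. This orthogonality to V1(z) is preserved by the isotropy group Q_z,
  so it holds on the whole Q_z-orbit through a point z' of the base cycle; if that orbit were
  open it would contain the images of z' under small transvections v |-> v + t omega(u,v) u,
  which destroy the orthogonality.
*)

definition vdot :: "'n::finite cvec \<Rightarrow> 'n cvec \<Rightarrow> complex" where
  "vdot x y = (\<Sum>i\<in>UNIV. x $ i * y $ i)"

definition Omega_mat :: "'n::finite cmat" where
  "Omega_mat = (\<chi> i j. (case i of
       Inl a \<Rightarrow> (case j of Inr b \<Rightarrow> (if a = b then 1 else 0) | Inl _ \<Rightarrow> 0)
     | Inr a \<Rightarrow> (case j of Inl b \<Rightarrow> (if a = b then -1 else 0) | Inr _ \<Rightarrow> 0)))"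

lemma sum_UNIV_Plus:
  "(\<Sum>k\<in>(UNIV::('a::finite + 'b::finite) set). f k) = (\<Sum>a\<in>UNIV. f (Inl a)) + (\<Sum>b\<in>UNIV. f (Inr b))"
  by (simp add: UNIV_Plus_UNIV[symmetric] sum.Plus del: UNIV_Plus_UNIV)

lemma sum_if_eq_mult:
  "(\<Sum>b\<in>(UNIV::'b::finite set). (if a = b then c else 0) * f b) = (c::'c::comm_ring_1) * f a"
proof -
  have "(\<Sum>b\<in>(UNIV::'b set). (if a = b then c else 0) * f b) = (\<Sum>b\<in>UNIV. if a = b then c * f b else 0)"
    by (rule sum.cong) auto
  then show ?thesis by simp
qed

lemma Omega_mat_apply:
  "(Omega_mat *v w) $ Inl a = w $ Inr a" "(Omega_mat *v w) $ Inr a = - w $ Inl a"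
  by (simp_all add: Omega_mat_def matrix_vector_mult_def sum_UNIV_Plus sum_if_eq_mult)

lemma omega_eq_vdot: "omega v w = vdot v (Omega_mat *v w)"
  by (simp add: omega_def vdot_def sum_UNIV_Plus Omega_mat_apply sum_subtractf sum_negf algebra_simps)

lemma vdot_matrix: "vdot (A *v x) y = vdot x (transpose A *v y)"
  by (simp add: vdot_def matrix_vector_mult_def transpose_def sum_distrib_left sum_distrib_right
      algebra_simps) (rule sum.swap)

lemma vdot_commute: "vdot x y = vdot y x"
  by (simp add: vdot_def mult.commute)

lemma vdot_zero_left [simp]: "vdot 0 y = 0"
  and vdot_zero_right [simp]: "vdot x 0 = 0"
  by (simp_all add: vdot_def)

lemma vdot_add_left: "vdot (x + y) z = vdot x z + vdot y z"
  by (simp add: vdot_def algebra_simps sum.distrib)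
lemma vdot_add_right: "vdot z (x + y) = vdot z x + vdot z y"
  by (simp add: vdot_def algebra_simps sum.distrib)
lemma vdot_diff_left: "vdot (x - y) z = vdot x z - vdot y z"
  by (simp add: vdot_def algebra_simps sum_subtractf)
lemma vdot_diff_right: "vdot z (x - y) = vdot z x - vdot z y"
  by (simp add: vdot_def algebra_simps sum_subtractf)
lemma vdot_minus_left: "vdot (- x) z = - vdot x z"
  by (simp add: vdot_def sum_negf)
lemma vdot_minus_right: "vdot z (- x) = - vdot z x"
  by (simp add: vdot_def sum_negf)
lemma vdot_smult_left: "vdot (c *s x) z = c * vdot x z"
  by (simp add: vdot_def algebra_simps sum_distrib_left)
lemma vdot_smult_right: "vdot z (c *s x) = c * vdot z x"
  by (simp add: vdot_def algebra_simps sum_distrib_left)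

lemma vdot_axis: "vdot (axis i 1) y = y $ i"
proof -
  have "vdot (axis i 1) y = (\<Sum>b\<in>UNIV. (if i = b then 1 else 0) * y $ b)"
    unfolding vdot_def axis_def by (rule sum.cong) auto
  then show ?thesis by (simp add: sum_if_eq_mult)
qed

lemma matrix_eq_vdot:
  assumes "\<And>v w. vdot v (A *v w) = vdot v (B *v w)"
  shows "A = B"
  using assms[of "axis _ 1"] by (simp add: matrix_eq vec_eq_iff vdot_axis)

lemma omega_congruence: "omega (g *v v) (g *v w) = vdot v ((transpose g ** Omega_mat ** g) *v w)"
  by (simp add: omega_eq_vdot vdot_matrix matrix_vector_mul_assoc matrix_mul_assoc)

lemma matrix_vector_mult_minus: "(- A::'a::comm_ring_1^'n^'m) *v x = - (A *v x)"
  by (simp add: matrix_vector_mult_def vec_eq_iff sum_negf)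

lemma matrix_vector_mult_minus_right: "(A::'a::comm_ring_1^'n^'m) *v (- x) = - (A *v x)"
  by (simp add: matrix_vector_mult_def vec_eq_iff sum_negf)

lemma matrix_vector_mult_smult: "(A::'a::comm_ring_1^'n^'m) *v (c *s x) = c *s (A *v x)"
  by (simp add: matrix_vector_mult_def vec_eq_iff sum_distrib_left algebra_simps)

lemma omega_add_left: "omega (x + y) z = omega x z + omega y z"
  by (simp add: omega_eq_vdot vdot_add_left)
lemma omega_add_right: "omega z (x + y) = omega z x + omega z y"
  by (simp add: omega_eq_vdot vdot_add_right matrix_vector_right_distrib)
lemma omega_minus_left: "omega (- x) z = - omega x z"
  by (simp add: omega_eq_vdot vdot_minus_left)
lemma omega_minus_right: "omega z (- x) = - omega z x"
  by (simp add: omega_eq_vdot vdot_minus_right matrix_vector_mult_minus_right)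
lemma omega_smult_left: "omega (c *s x) z = c * omega x z"
  by (simp add: omega_eq_vdot vdot_smult_left)
lemma omega_smult_right: "omega z (c *s x) = c * omega z x"
  by (simp add: omega_eq_vdot vdot_smult_right matrix_vector_mult_smult)

lemma omega_antisym: "omega x y = - omega y x"
  by (simp add: omega_def sum_negf[symmetric] algebra_simps)

lemma omega_self: "omega x x = 0"
  using omega_antisym[of x x] by simp

lemma matrix_mul_minus_left: "(- A::'a::comm_ring_1^'n^'m) ** B = - (A ** B)"
  by (simp add: matrix_matrix_mult_def vec_eq_iff sum_negf)

lemma matrix_mul_minus_right: "(A::'a::comm_ring_1^'n^'m) ** (- B) = - (A ** B)"
  by (simp add: matrix_matrix_mult_def vec_eq_iff sum_negf)

lemma matrix_add_rdistrib: "((A::'a::comm_ring_1^'n^'m) + B) ** C = A ** C + B ** C"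
  by (simp add: matrix_matrix_mult_def vec_eq_iff sum.distrib algebra_simps)

lemma matrix_diff_ldistrib: "(A::'a::comm_ring_1^'n^'m) ** (B - C) = A ** B - A ** C"
  by (simp add: matrix_matrix_mult_def vec_eq_iff sum_subtractf algebra_simps)

lemma matrix_diff_rdistrib: "((A::'a::comm_ring_1^'n^'m) - B) ** C = A ** C - B ** C"
  by (simp add: matrix_matrix_mult_def vec_eq_iff sum_subtractf algebra_simps)

lemma transpose_add: "transpose (A + B) = transpose A + transpose B"
  by (simp add: transpose_def vec_eq_iff)

lemma matrix_inv_right: "invertible A \<Longrightarrow> (A::'a::semiring_1^'n^'m) ** matrix_inv A = mat 1"
  and matrix_inv_left: "invertible A \<Longrightarrow> matrix_inv A ** A = mat 1"
  unfolding invertible_def matrix_inv_def by (rule someI2_ex; auto)+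

lemma matrix_inv_unique_left:
  fixes A B :: "'a::field^'n^'n"
  assumes "B ** A = mat 1"
  shows "matrix_inv A = B"
proof -
  have "invertible A" using assms invertible_left_inverse by blast
  then have "B = B ** (A ** matrix_inv A)" by (simp add: matrix_inv_right)
  then show ?thesis by (simp add: matrix_mul_assoc assms)
qed

lemma matrix_inv_unique_right:
  fixes A B :: "'a::field^'n^'n"
  shows "A ** B = mat 1 \<Longrightarrow> matrix_inv A = B"
  using matrix_inv_unique_left matrix_left_right_inverse by blast

lemma matrix_inv_inv: "invertible (A::'a::field^'n^'n) \<Longrightarrow> matrix_inv (matrix_inv A) = A"
  by (simp add: matrix_inv_right matrix_inv_unique_left)

lemma transpose_Omega_mat: "transpose (Omega_mat::'n::finite cmat) = - Omega_mat"
  by (auto simp: Omega_mat_def transpose_def vec_eq_iff split: sum.splits)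

lemma Omega_mat_squared: "(Omega_mat::'n::finite cmat) ** Omega_mat = - mat 1"
proof -
  have "(Omega_mat *v (Omega_mat *v w)) $ k = - w $ k" for w :: "'n cvec" and k
    by (cases k) (simp_all add: Omega_mat_apply)
  then have "(Omega_mat ** Omega_mat) *v w = (- mat 1) *v w" for w :: "'n cvec"
    by (simp add: vec_eq_iff matrix_vector_mul_assoc[symmetric] matrix_vector_mult_minus)
  then show ?thesis by (simp add: matrix_eq)
qed

lemma Omega_mat_orthogonal:
  "(Omega_mat::'n::finite cmat) ** transpose Omega_mat = mat 1"
  "transpose (Omega_mat::'n::finite cmat) ** Omega_mat = mat 1"
  by (simp_all add: transpose_Omega_mat matrix_mul_minus_left matrix_mul_minus_right Omega_mat_squared)

lemma Omega_mat_invertible: "invertible (Omega_mat::'n::finite cmat)"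
  using Omega_mat_orthogonal invertible_def by blast

definition symplectic :: "'n::finite cmat \<Rightarrow> bool" where
  "symplectic g \<longleftrightarrow> transpose g ** Omega_mat ** g = Omega_mat"

lemma symplectic_iff_preserves_omega:
  "symplectic g \<longleftrightarrow> (\<forall>v w. omega (g *v v) (g *v w) = omega v w)"
proof
  assume "symplectic g"
  then show "\<forall>v w. omega (g *v v) (g *v w) = omega v w"
    unfolding symplectic_def omega_congruence by (simp add: omega_eq_vdot)
next
  assume "\<forall>v w. omega (g *v v) (g *v w) = omega v w"
  then have "vdot v ((transpose g ** Omega_mat ** g) *v w) = vdot v (Omega_mat *v w)" for v w
    by (metis omega_congruence omega_eq_vdot)
  then show "symplectic g"
    unfolding symplectic_def by (rule matrix_eq_vdot)
qed

lemma symplectic_invertible: "symplectic g \<Longrightarrow> invertible g"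
  unfolding symplectic_def invertible_left_inverse
  by (metis Omega_mat_orthogonal(2) matrix_mul_assoc)

lemma SpC_iff: "g \<in> SpC \<longleftrightarrow> symplectic g"
  using symplectic_invertible by (auto simp: SpC_def symplectic_iff_preserves_omega)

lemma symplectic_mat1: "symplectic (mat 1)"
  by (simp add: symplectic_def)

lemma symplectic_mult: "symplectic a \<Longrightarrow> symplectic b \<Longrightarrow> symplectic (a ** b)"
  by (simp add: symplectic_iff_preserves_omega matrix_vector_mul_assoc[symmetric])

lemma symplectic_inv:
  assumes "symplectic g"
  shows "symplectic (matrix_inv g)"
proof -
  have "g *v (matrix_inv g *v v) = v" for v
    using symplectic_invertible[OF assms] by (simp add: matrix_vector_mul_assoc matrix_inv_right)
  then show ?thesis
    using assms unfolding symplectic_iff_preserves_omega by metis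
qed

definition real_mat :: "'n::finite cmat \<Rightarrow> bool" where
  "real_mat A \<longleftrightarrow> (\<forall>i j. A $ i $ j \<in> \<real>)"

definition cnj_mat :: "'n::finite cmat \<Rightarrow> 'n cmat" where
  "cnj_mat A = (\<chi> i j. cnj (A $ i $ j))"

lemma real_mat_iff_Im: "real_mat A \<longleftrightarrow> (\<forall>i j. Im (A $ i $ j) = 0)"
  by (simp add: real_mat_def complex_is_Real_iff)

lemma real_mat_iff_cnj_mat: "real_mat A \<longleftrightarrow> cnj_mat A = A"
  by (auto simp: real_mat_def cnj_mat_def vec_eq_iff Reals_cnj_iff)

lemma cnj_mat_mult: "cnj_mat (A ** B) = cnj_mat A ** cnj_mat B"
  by (simp add: cnj_mat_def matrix_matrix_mult_def vec_eq_iff)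

lemma cnj_mat_mat1 [simp]: "cnj_mat (mat 1) = mat 1"
  by (simp add: cnj_mat_def mat_def vec_eq_iff)

lemma real_mat_mult: "real_mat A \<Longrightarrow> real_mat B \<Longrightarrow> real_mat (A ** B)"
  by (simp add: real_mat_iff_cnj_mat cnj_mat_mult)

lemma real_mat_add: "real_mat A \<Longrightarrow> real_mat B \<Longrightarrow> real_mat (A + B)"
  by (simp add: real_mat_def)

lemma real_mat_scaleR: "real_mat A \<Longrightarrow> real_mat (r *\<^sub>R A)"
  by (simp add: real_mat_iff_Im)

lemma real_mat_transpose: "real_mat A \<Longrightarrow> real_mat (transpose A)"
  by (simp add: real_mat_def transpose_def)

lemma real_mat_mat1: "real_mat (mat 1)"
  and real_mat_Omega_mat: "real_mat Omega_mat"
  by (auto simp: real_mat_def mat_def Omega_mat_def split: sum.splits)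

lemma real_mat_inv:
  assumes "real_mat A" "invertible A"
  shows "real_mat (matrix_inv A)"
proof -
  have "cnj_mat (matrix_inv A) ** A = mat 1"
    using assms by (metis cnj_mat_mult cnj_mat_mat1 matrix_inv_left real_mat_iff_cnj_mat)
  then show ?thesis
    by (metis matrix_inv_unique_left real_mat_iff_cnj_mat)
qed

lemma SpR_iff: "g \<in> SpR \<longleftrightarrow> real_mat g \<and> symplectic g"
  by (auto simp: SpR_def SpC_iff real_mat_def)

section \<open>Invariant inner products of compact groups\<close>

definition qform :: "'n::finite cmat \<Rightarrow> 'n cvec \<Rightarrow> complex" where
  "qform P x = vdot (cconj x) (P *v x)"

definition pos_def :: "'n::finite cmat \<Rightarrow> bool" where
  "pos_def P \<longleftrightarrow> (\<forall>x. x \<noteq> 0 \<longrightarrow> Re (qform P x) > 0)"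

definition euclidean_form :: "'n::finite cmat \<Rightarrow> bool" where
  "euclidean_form P \<longleftrightarrow> real_mat P \<and> transpose P = P \<and> pos_def P"

definition congruence :: "'n::finite cmat \<Rightarrow> 'n cmat \<Rightarrow> 'n cmat" where
  "congruence g P = transpose g ** P ** g"

lemma congruence_congruence: "congruence a (congruence b P) = congruence (b ** a) P"
  by (simp add: congruence_def matrix_transpose_mul matrix_mul_assoc)

lemma congruence_mat1 [simp]: "congruence (mat 1) P = P"
  by (simp add: congruence_def)

lemma congruence_add: "congruence g (P + Q) = congruence g P + congruence g Q"
  by (simp add: congruence_def matrix_add_ldistrib matrix_add_rdistrib)

lemma congruence_diff: "congruence g (P - Q) = congruence g P - congruence g Q"
  by (simp add: congruence_def matrix_diff_ldistrib matrix_diff_rdistrib)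

lemma congruence_scaleR: "congruence g (r *\<^sub>R P) = r *\<^sub>R congruence g P"
  by (simp add: congruence_def matrix_scalar_ac scalar_matrix_assoc)

lemma linear_congruence: "linear (congruence g)"
  by (rule linearI) (simp_all add: congruence_add congruence_scaleR)

lemma norm_entry_le: "norm (A $ i $ j) \<le> norm (A::'a::real_normed_vector^'n::finite^'m::finite)"
  by (rule order_trans[OF Finite_Cartesian_Product.norm_nth_le Finite_Cartesian_Product.norm_nth_le])

lemma norm_le_entrywise_bound:
  assumes "\<And>i j. norm ((A::'a::real_normed_vector^'n^'m) $ i $ j) \<le> c"
  shows "norm A \<le> real CARD('m) * real CARD('n) * c"
proof -
  have sum_bound: "norm x \<le> (\<Sum>i\<in>UNIV. norm (x $ i))" for x :: "'b::real_normed_vector^'k"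
    unfolding norm_vec_def by (rule L2_set_le_sum) auto
  have "norm A \<le> (\<Sum>i\<in>UNIV. \<Sum>j\<in>UNIV. norm (A $ i $ j))"
    by (rule order_trans[OF sum_bound]) (intro sum_mono sum_bound)
  also have "\<dots> \<le> (\<Sum>i\<in>(UNIV::'m set). \<Sum>j\<in>(UNIV::'n set). c)"
    by (intro sum_mono assms)
  finally show ?thesis by simp
qed

lemma norm_matrix_mult_le:
  fixes A :: "complex^'k^'m" and B :: "complex^'n^'k"
  shows "norm (A ** B) \<le> real CARD('m) * real CARD('n) * (real CARD('k) * (norm A * norm B))"
proof (rule norm_le_entrywise_bound)
  fix i j
  have "norm ((A ** B) $ i $ j) \<le> (\<Sum>k\<in>(UNIV::'k set). norm (A $ i $ k * B $ k $ j))"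
    unfolding matrix_matrix_mult_def by (simp add: norm_sum)
  also have "\<dots> \<le> (\<Sum>k\<in>(UNIV::'k set). norm A * norm B)"
    by (intro sum_mono) (simp add: norm_mult mult_mono norm_entry_le)
  finally show "norm ((A ** B) $ i $ j) \<le> real CARD('k) * (norm A * norm B)" by simp
qed

lemma norm_transpose_le: "norm (transpose (A::complex^'n^'m)) \<le> real CARD('n) * real CARD('m) * norm A"
  by (rule norm_le_entrywise_bound) (simp add: transpose_def norm_entry_le)

lemma norm_congruence_le:
  fixes k :: "'n::finite cmat"
  assumes "norm k \<le> R"
  shows "norm (congruence k Z) \<le> (real CARD('n+'n))^8 * R^2 * norm Z"
proof -
  let ?c = "real CARD('n+'n)"
  have R: "0 \<le> R" using assms norm_ge_zero order_trans by blast
  have t: "norm (transpose k) \<le> ?c * ?c * R"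
    using norm_transpose_le[of k] assms by (simp add: mult_left_mono order_trans)
  have "norm (transpose k ** Z) \<le> ?c * ?c * (?c * (norm (transpose k) * norm Z))"
    by (rule norm_matrix_mult_le)
  also have "\<dots> \<le> ?c * ?c * (?c * ((?c * ?c * R) * norm Z))"
    by (intro mult_left_mono mult_right_mono t) auto
  finally have a: "norm (transpose k ** Z) \<le> ?c^5 * R * norm Z"
    by (simp add: power_def algebra_simps)
  have "norm (transpose k ** Z ** k) \<le> ?c * ?c * (?c * (norm (transpose k ** Z) * norm k))"
    by (rule norm_matrix_mult_le)
  also have "\<dots> \<le> ?c * ?c * (?c * ((?c^5 * R * norm Z) * R))"
    by (intro mult_left_mono mult_mono a assms) (auto simp: R)
  finally show ?thesis by (simp add: congruence_def power_def algebra_simps)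
qed

lemma continuous_on_matrix_mult [continuous_intros]:
  fixes f :: "'x::topological_space \<Rightarrow> complex^'k^'m" and g :: "'x \<Rightarrow> complex^'n^'k"
  assumes "continuous_on S f" "continuous_on S g"
  shows "continuous_on S (\<lambda>x. f x ** g x)"
  unfolding matrix_matrix_mult_def by (intro continuous_intros assms)

lemma continuous_on_transpose [continuous_intros]:
  fixes f :: "'x::topological_space \<Rightarrow> complex^'n^'m"
  assumes "continuous_on S f"
  shows "continuous_on S (\<lambda>x. transpose (f x))"
  unfolding transpose_def by (intro continuous_intros assms)

lemma cconj_matrix_vector_mult: "cconj (A *v x) = cnj_mat A *v cconj x"
  by (simp add: cconj_def cnj_mat_def matrix_vector_mult_def vec_eq_iff)

lemma cconj_real_matrix_vector_mult: "real_mat A \<Longrightarrow> cconj (A *v x) = A *v cconj x"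
  by (simp add: cconj_matrix_vector_mult real_mat_iff_cnj_mat)

lemma cconj_zero [simp]: "cconj 0 = 0"
  by (simp add: cconj_def vec_eq_iff)

lemma cconj_add: "cconj (x + y) = cconj x + cconj y"
  by (simp add: cconj_def vec_eq_iff)

lemma cconj_diff: "cconj (x - y) = cconj x - cconj y"
  by (simp add: cconj_def vec_eq_iff)

lemma cconj_smult: "cconj (c *s x) = cnj c *s cconj x"
  by (simp add: cconj_def vec_eq_iff)

lemma Re_vdot_cconj_self: "Re (vdot (cconj y) y) = (norm y)^2"
proof -
  have "Re (cnj z * z) = (cmod z)^2" for z
    using cmod_power2[of z] by (simp add: power2_eq_square)
  then have "Re (vdot (cconj y) y) = (\<Sum>i\<in>UNIV. (cmod (y$i))^2)"
    unfolding vdot_def cconj_def Re_sum vec_lambda_beta by simp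
  also have "\<dots> = (norm y)^2"
    by (simp add: norm_vec_def L2_set_def sum_nonneg)
  finally show ?thesis .
qed

lemma scaleR_matrix_vector_mult: "(r *\<^sub>R (A::complex^'n^'m)) *v x = r *\<^sub>R (A *v x)"
  by (simp add: matrix_vector_mult_def vec_eq_iff scaleR_sum_right)

lemma scaleR_eq_smult: "r *\<^sub>R (x::complex^'n) = of_real r *s x"
  by (simp add: vec_eq_iff) (metis scaleR_conv_of_real)

lemma qform_add: "qform (A + B) x = qform A x + qform B x"
  by (simp add: qform_def matrix_vector_mult_add_rdistrib vdot_add_right)

lemma qform_scaleR: "qform (r *\<^sub>R A) x = of_real r * qform A x"
  by (simp add: qform_def scaleR_matrix_vector_mult scaleR_eq_smult vdot_smult_right)

lemma qform_zero [simp]: "qform P 0 = 0"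
  by (simp add: qform_def)

lemma qform_congruence:
  assumes "real_mat g"
  shows "qform (congruence g Q) x = qform Q (g *v x)"
proof -
  have "qform (congruence g Q) x = vdot (cconj x) (transpose g *v (Q *v (g *v x)))"
    by (simp add: congruence_def qform_def matrix_vector_mul_assoc matrix_mul_assoc del: transpose_matrix_vector)
  also have "\<dots> = vdot (g *v cconj x) (Q *v (g *v x))" by (simp only: vdot_matrix)
  finally show ?thesis using assms by (simp add: qform_def cconj_real_matrix_vector_mult)
qed

lemma pos_def_Re_qform_nonneg: "pos_def P \<Longrightarrow> 0 \<le> Re (qform P x)"
  by (cases "x = 0") (auto simp: pos_def_def less_imp_le)

lemma euclidean_form_mat1: "euclidean_form (mat 1)"
  by (simp add: euclidean_form_def pos_def_def real_mat_mat1 qform_def Re_vdot_cconj_self)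

lemma euclidean_form_congruence:
  assumes "euclidean_form P" "real_mat g" "invertible g"
  shows "euclidean_form (congruence g P)"
proof -
  have "g *v x \<noteq> 0" if "x \<noteq> 0" for x
    using that inj_matrix_vector_mult[OF assms(3)] by (metis injD matrix_vector_mult_0_right)
  then have "pos_def (congruence g P)"
    using assms(1) by (simp add: pos_def_def qform_congruence[OF assms(2)] euclidean_form_def)
  then show ?thesis
    using assms by (simp add: euclidean_form_def congruence_def real_mat_mult real_mat_transpose
        matrix_transpose_mul matrix_mul_assoc)
qed

lemma convex_euclidean_forms: "convex {P::'n::finite cmat. euclidean_form P}"
proof (rule convexI, clarsimp)
  fix P Q :: "'n cmat" and u v :: real
  assume PQ: "euclidean_form P" "euclidean_form Q" and uv: "0 \<le> u" "0 \<le> v" "u + v = 1"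
  have "Re (qform (u *\<^sub>R P + v *\<^sub>R Q) x) > 0" if "x \<noteq> 0" for x
  proof -
    have "Re (qform P x) > 0" "Re (qform Q x) > 0"
      using PQ that by (auto simp: euclidean_form_def pos_def_def)
    moreover have "u > 0 \<or> v > 0" using uv by linarith
    ultimately show ?thesis
      using uv by (auto simp: qform_add qform_scaleR add_pos_nonneg add_nonneg_pos)
  qed
  moreover have "transpose (u *\<^sub>R P + v *\<^sub>R Q) = u *\<^sub>R P + v *\<^sub>R Q"
    using PQ by (simp add: euclidean_form_def transpose_add transpose_scalar)
  ultimately show "euclidean_form (u *\<^sub>R P + v *\<^sub>R Q)"
    using PQ by (simp add: euclidean_form_def pos_def_def real_mat_add real_mat_scaleR)
qed

lemma norm_midpoint_squared:
  fixes a b :: "'a::real_inner"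
  shows "(norm (midpoint a b))^2 = ((norm a)^2 + (norm b)^2) / 2 - (norm (a - b))^2 / 4"
  unfolding power2_norm_eq_inner midpoint_def
  by (simp add: inner_add_left inner_add_right inner_diff_left inner_diff_right inner_commute)
     (simp add: field_simps inner_commute)

lemma matgroup_mult_image:
  assumes "matgroup H" "g \<in> H"
  shows "(\<lambda>k. g ** k) ` H = H"
proof
  show "(\<lambda>k. g ** k) ` H \<subseteq> H" using assms by (auto simp: matgroup_def)
  show "H \<subseteq> (\<lambda>k. g ** k) ` H"
  proof
    fix k assume "k \<in> H"
    then have "g ** (matrix_inv g ** k) = k" "matrix_inv g ** k \<in> H"
      using assms by (auto simp: matgroup_def matrix_mul_assoc matrix_inv_right)
    then show "k \<in> (\<lambda>k. g ** k) ` H" by (metis image_eqI)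
  qed
qed

context
  fixes K :: "'n::finite cmat set"
  assumes K_compact: "compact K" and K_group: "matgroup K"
    and K_real: "\<And>k. k \<in> K \<Longrightarrow> real_mat k"
begin

lemma congruence_bounded_on_group:
  obtains B where "B > 0" "\<And>k Z. k \<in> K \<Longrightarrow> norm (congruence k Z) \<le> B * norm Z"
proof -
  obtain R where R: "\<And>k. k \<in> K \<Longrightarrow> norm k \<le> R"
    using compact_imp_bounded[OF K_compact] unfolding bounded_iff by blast
  define B where "B = (real CARD('n+'n))^8 * R^2 + 1"
  have "norm (congruence k Z) \<le> B * norm Z" if "k \<in> K" for k Z
  proof -
    have "norm (congruence k Z) \<le> (real CARD('n+'n))^8 * R^2 * norm Z"
      using norm_congruence_le R that by blast
    also have "\<dots> \<le> B * norm Z" unfolding B_def by (simp add: distrib_right)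
    finally show ?thesis .
  qed
  moreover have "B > 0" unfolding B_def by (simp add: add_nonneg_pos)
  ultimately show thesis using that by blast
qed

definition orbit_sup :: "'n cmat \<Rightarrow> real" where
  "orbit_sup P = (SUP k\<in>K. norm (congruence k P))"

lemma orbit_sup_upper:
  assumes "k \<in> K"
  shows "norm (congruence k P) \<le> orbit_sup P"
proof -
  obtain B where "\<And>k Z. k \<in> K \<Longrightarrow> norm (congruence k Z) \<le> B * norm Z"
    using congruence_bounded_on_group by blast
  then have "bdd_above ((\<lambda>k. norm (congruence k P)) ` K)"
    by (intro bdd_aboveI2) blast
  then show ?thesis
    unfolding orbit_sup_def using assms by (rule cSUP_upper2) simp
qed

lemma orbit_sup_least:
  "(\<And>k. k \<in> K \<Longrightarrow> norm (congruence k P) \<le> M) \<Longrightarrow> orbit_sup P \<le> M"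
  unfolding orbit_sup_def using K_group by (intro cSUP_least) (auto simp: matgroup_def)

lemma lipschitz_orbit_sup:
  obtains B where "B-lipschitz_on UNIV orbit_sup"
proof -
  obtain B where B: "B > 0" "\<And>k Z. k \<in> K \<Longrightarrow> norm (congruence k Z) \<le> B * norm Z"
    using congruence_bounded_on_group by blast
  have le: "orbit_sup P \<le> orbit_sup Q + B * norm (P - Q)" for P Q
  proof (rule orbit_sup_least)
    fix k assume k: "k \<in> K"
    have "norm (congruence k P) \<le> norm (congruence k Q) + norm (congruence k (P - Q))"
      by (metis congruence_diff add.commute diff_add_cancel norm_triangle_ineq)
    also have "\<dots> \<le> orbit_sup Q + B * norm (P - Q)"
      by (intro add_mono orbit_sup_upper B k)
    finally show "norm (congruence k P) \<le> orbit_sup Q + B * norm (P - Q)" .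
  qed
  have "dist (orbit_sup P) (orbit_sup Q) \<le> B * dist P Q" for P Q
    using le[of P Q] le[of Q P] by (simp add: dist_real_def dist_norm norm_minus_commute abs_le_iff)
  then show thesis
    using B(1) by (intro that lipschitz_onI) auto
qed

lemma orbit_sup_congruence:
  assumes "g \<in> K"
  shows "orbit_sup (congruence g Q) = orbit_sup Q"
proof -
  have "orbit_sup (congruence g Q) = (SUP k\<in>(\<lambda>k. g ** k) ` K. norm (congruence k Q))"
    unfolding orbit_sup_def by (simp add: congruence_congruence image_image)
  then show ?thesis
    unfolding matgroup_mult_image[OF K_group assms] orbit_sup_def .
qed

text \<open>The Euclidean norm is strictly convex and each congruence by an element of \<open>K\<close>
  has an inverse congruence of uniformly bounded norm; hence \<open>orbit_sup\<close> is strictly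
  midpoint convex on each of its level sets.\<close>

lemma orbit_sup_midpoint_less:
  assumes "P \<noteq> Q" and "orbit_sup Q = orbit_sup P"
  shows "orbit_sup (midpoint P Q) < orbit_sup P"
proof -
  obtain B where B: "B > 0" "\<And>k Z. k \<in> K \<Longrightarrow> norm (congruence k Z) \<le> B * norm Z"
    using congruence_bounded_on_group by blast
  define n where "n = orbit_sup P"
  define \<delta> where "\<delta> = (norm (P - Q) / B)^2 / 4"
  have "\<delta> > 0" unfolding \<delta>_def using assms(1) B(1) by simp
  have n0: "n \<ge> 0"
    unfolding n_def using orbit_sup_upper[of "mat 1" P] K_group
    by (simp add: matgroup_def order_trans[OF norm_ge_zero])
  have bound: "(norm (congruence k (midpoint P Q)))^2 \<le> n^2 - \<delta>" if k: "k \<in> K" for k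
  proof -
    have ki: "matrix_inv k \<in> K" "invertible k" using K_group k by (auto simp: matgroup_def)
    have "P - Q = congruence (matrix_inv k) (congruence k (P - Q))"
      by (simp add: congruence_congruence matrix_inv_right[OF ki(2)])
    then have "norm (P - Q) \<le> B * norm (congruence k P - congruence k Q)"
      using B(2)[OF ki(1)] by (metis congruence_diff)
    then have lb: "norm (P - Q) / B \<le> norm (congruence k P - congruence k Q)"
      using B(1) by (simp add: field_simps)
    have "norm (congruence k P) \<le> n" "norm (congruence k Q) \<le> n"
      unfolding n_def using orbit_sup_upper[OF k] assms(2) by metis+
    then have "(norm (midpoint (congruence k P) (congruence k Q)))^2 \<le> (n^2 + n^2)/2 - (norm (P - Q) / B)^2/4"
      unfolding norm_midpoint_squared using lb B(1)
      by (intro diff_mono divide_right_mono add_mono power_mono) auto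
    then show ?thesis
      unfolding \<delta>_def midpoint_linear_image[OF linear_congruence] by simp
  qed
  then have "n^2 - \<delta> \<ge> 0"
    using K_group by (meson matgroup_def order_trans zero_le_power2)
  have "orbit_sup (midpoint P Q) \<le> sqrt (n^2 - \<delta>)"
    by (rule orbit_sup_least) (metis bound real_le_rsqrt)
  also have "\<dots> < n"
    using \<open>\<delta> > 0\<close> n0 real_sqrt_less_mono[of "n^2 - \<delta>" "n^2"] by simp
  finally show ?thesis unfolding n_def .
qed

text \<open>Minimise \<open>orbit_sup\<close> over the convex hull of the orbit of the identity form; by
  strict midpoint convexity the minimiser is fixed by \<open>K\<close>.\<close>

theorem compact_group_invariant_form:
  obtains P where "euclidean_form P" "\<And>g. g \<in> K \<Longrightarrow> congruence g P = P"
proof -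
  define C where "C = convex hull ((\<lambda>k. congruence k (mat 1)) ` K)"
  have "compact C"
    unfolding C_def congruence_def
    by (intro compact_convex_hull compact_continuous_image K_compact continuous_intros)
  moreover have "mat 1 \<in> C"
    unfolding C_def using K_group by (intro hull_inc) (force simp: matgroup_def)
  ultimately obtain P where P: "P \<in> C" and P_min: "\<And>Q. Q \<in> C \<Longrightarrow> orbit_sup P \<le> orbit_sup Q"
    using continuous_attains_inf lipschitz_orbit_sup
    by (metis continuous_on_subset lipschitz_on_continuous_on subset_UNIV empty_iff)
  have "C \<subseteq> {P. euclidean_form P}"
    unfolding C_def using K_group K_real
    by (intro hull_minimal convex_euclidean_forms)
       (auto simp: matgroup_def intro: euclidean_form_congruence euclidean_form_mat1)
  moreover have "congruence g P = P" if g: "g \<in> K" for g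
  proof (rule ccontr)
    assume ne: "congruence g P \<noteq> P"
    have "congruence g ` C = convex hull ((\<lambda>k. congruence k (mat 1)) ` (\<lambda>k. k ** g) ` K)"
      unfolding C_def convex_hull_linear_image[OF linear_congruence]
      by (simp add: image_image congruence_congruence)
    also have "\<dots> \<subseteq> C"
      unfolding C_def using K_group g by (intro hull_mono image_mono) (auto simp: matgroup_def)
    finally have "midpoint P (congruence g P) \<in> C"
      using P unfolding C_def by (intro midpoints_in_convex_hull) auto
    moreover have "orbit_sup (midpoint P (congruence g P)) < orbit_sup P"
      using ne g by (intro orbit_sup_midpoint_less) (auto simp: orbit_sup_congruence)
    ultimately show False using P_min by fastforce
  qed
  ultimately show thesis using P that by blast
qed

end

section \<open>The trace of the inverse of a positive definite matrix\<close>

definition conj_transpose :: "'n::finite cmat \<Rightarrow> 'n cmat" where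
  "conj_transpose A = transpose (cnj_mat A)"

text \<open>For Hermitian positive definite \<open>P\<close> the trace of \<open>P\<^sup>-\<^sup>1\<close> is the maximum over \<open>Y\<close> of
  the following functions, which are affine in \<open>P\<close>.\<close>

definition inv_trace_minorant :: "'n::finite cmat \<Rightarrow> 'n cmat \<Rightarrow> real" where
  "inv_trace_minorant P Y = 2 * Re (trace Y) - Re (trace (conj_transpose Y ** P ** Y))"

lemma pos_def_invertible:
  assumes "pos_def P"
  shows "invertible P"
proof -
  have "x = 0" if "P *v x = 0" for x
    using assms that unfolding pos_def_def qform_def by force
  then show ?thesis
    using matrix_left_invertible_ker invertible_left_inverse by blast
qed

lemma conj_transpose_mult: "conj_transpose (A ** B) = conj_transpose B ** conj_transpose A"
  by (simp add: conj_transpose_def cnj_mat_mult matrix_transpose_mul)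

lemma conj_transpose_diff: "conj_transpose (A - B) = conj_transpose A - conj_transpose B"
  by (simp add: conj_transpose_def cnj_mat_def transpose_def vec_eq_iff)

lemma conj_transpose_scaleR: "conj_transpose (t *\<^sub>R A) = t *\<^sub>R conj_transpose A"
proof -
  have "(t *\<^sub>R B) $ i $ j = of_real t * B $ i $ j" for B :: "'n::finite cmat" and i j
    by (metis vector_scaleR_component scaleR_conv_of_real)
  then show ?thesis by (simp add: conj_transpose_def cnj_mat_def transpose_def vec_eq_iff)
qed

lemma conj_transpose_euclidean_form: "euclidean_form P \<Longrightarrow> conj_transpose P = P"
  by (simp add: euclidean_form_def conj_transpose_def real_mat_iff_cnj_mat)

lemma trace_conj_transpose: "trace (conj_transpose Y) = cnj (trace Y)"
  by (simp add: conj_transpose_def trace_def cnj_mat_def transpose_def)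

lemma trace_scaleR: "trace (r *\<^sub>R A) = of_real r * trace (A::'n::finite cmat)"
proof -
  have "(r *\<^sub>R A) $ i $ i = of_real r * A $ i $ i" for i
    by (metis vector_scaleR_component scaleR_conv_of_real)
  then show ?thesis by (simp add: trace_def sum_distrib_left)
qed

lemma trace_conj_transpose_qform:
  "trace (conj_transpose Z ** P ** Z) = (\<Sum>j\<in>UNIV. qform P (column j Z))"
  unfolding trace_def qform_def vdot_def conj_transpose_def cnj_mat_def transpose_def cconj_def column_def
  by (simp add: matrix_matrix_mult_def matrix_vector_mult_def sum_distrib_left sum_distrib_right
      mult.assoc) (rule sum.cong[OF refl], rule sum.swap)

lemma trace_conj_transpose_pos_def:
  assumes "pos_def P"
  shows "Re (trace (conj_transpose Z ** P ** Z)) \<ge> 0"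
    and "Re (trace (conj_transpose Z ** P ** Z)) = 0 \<Longrightarrow> Z = 0"
proof -
  have col: "Re (qform P (column j Z)) \<ge> 0" for j
    using assms by (rule pos_def_Re_qform_nonneg)
  show "Re (trace (conj_transpose Z ** P ** Z)) \<ge> 0"
    by (simp add: trace_conj_transpose_qform Re_sum sum_nonneg col)
  assume "Re (trace (conj_transpose Z ** P ** Z)) = 0"
  then have "\<forall>j\<in>UNIV. Re (qform P (column j Z)) = 0"
    by (subst sum_nonneg_eq_0_iff[symmetric]) (auto simp: col trace_conj_transpose_qform Re_sum)
  then have "column j Z = 0" for j
    using assms unfolding pos_def_def by force
  then show "Z = 0" by (simp add: vec_eq_iff column_def)
qed

lemma conj_transpose_inv:
  assumes "conj_transpose P = P" "invertible P"
  shows "conj_transpose (matrix_inv P) = matrix_inv P"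
proof -
  have "conj_transpose (matrix_inv P) ** P = mat 1"
    by (metis assms matrix_inv_right conj_transpose_mult conj_transpose_def cnj_mat_mat1 transpose_mat)
  then show ?thesis by (metis matrix_inv_unique_left)
qed

text \<open>Completing the square.\<close>

lemma inv_trace_minus_minorant:
  assumes P: "conj_transpose P = P" "pos_def P"
  defines "Q \<equiv> matrix_inv P"
  shows "Re (trace Q) - inv_trace_minorant P Y = Re (trace (conj_transpose (Y - Q) ** P ** (Y - Q)))"
proof -
  have i: "invertible P" using P pos_def_invertible by blast
  have "conj_transpose (Y - Q) ** P ** (Y - Q) =
      conj_transpose Y ** P ** Y - conj_transpose Y ** (P ** Q) - (Q ** P) ** Y + (Q ** P) ** Q"
    using conj_transpose_inv[OF P(1) i]
    by (simp add: Q_def conj_transpose_diff matrix_diff_ldistrib matrix_diff_rdistrib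
        matrix_mul_assoc algebra_simps)
  also have "\<dots> = conj_transpose Y ** P ** Y - conj_transpose Y - Y + Q"
    by (simp add: Q_def matrix_inv_right[OF i] matrix_inv_left[OF i])
  finally show ?thesis
    by (simp add: inv_trace_minorant_def trace_add trace_sub trace_conj_transpose)
qed

lemma inv_trace_minorant_le:
  assumes "conj_transpose P = P" "pos_def P"
  shows "inv_trace_minorant P Y \<le> Re (trace (matrix_inv P))"
  using inv_trace_minus_minorant[OF assms, of Y]
    trace_conj_transpose_pos_def(1)[OF assms(2), of "Y - matrix_inv P"] by linarith

lemma inv_trace_minorant_inv:
  assumes "conj_transpose P = P" "pos_def P"
  shows "inv_trace_minorant P (matrix_inv P) = Re (trace (matrix_inv P))"
  using inv_trace_minus_minorant[OF assms, of "matrix_inv P"]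
  by (simp add: conj_transpose_def cnj_mat_def transpose_def trace_def)

lemma inv_trace_minorant_eq_imp:
  assumes "conj_transpose P = P" "pos_def P"
    and "inv_trace_minorant P Y = Re (trace (matrix_inv P))"
  shows "Y = matrix_inv P"
  using inv_trace_minus_minorant[OF assms(1,2), of Y] assms(3)
    trace_conj_transpose_pos_def(2)[OF assms(2), of "Y - matrix_inv P"] by simp

lemma inv_trace_minorant_zero: "inv_trace_minorant P 0 = 0"
  by (simp add: inv_trace_minorant_def conj_transpose_def cnj_mat_def transpose_def trace_def)

lemma inv_trace_minorant_midpoint:
  "inv_trace_minorant (midpoint A B) Y = (inv_trace_minorant A Y + inv_trace_minorant B Y) / 2"
proof -
  have "conj_transpose Y ** midpoint A B ** Y =
      midpoint (conj_transpose Y ** A ** Y) (conj_transpose Y ** B ** Y)"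
    by (simp add: midpoint_def matrix_add_ldistrib matrix_add_rdistrib scalar_matrix_assoc
        matrix_scalar_ac scaleR_add_right)
  then show ?thesis
    by (simp add: inv_trace_minorant_def midpoint_def trace_scaleR trace_add field_simps)
qed

lemma Re_trace_inv_midpoint_less:
  assumes A: "conj_transpose A = A" "pos_def A" and B: "conj_transpose B = B" "pos_def B"
    and M: "conj_transpose (midpoint A B) = midpoint A B" "pos_def (midpoint A B)"
    and "A \<noteq> B"
  shows "Re (trace (matrix_inv (midpoint A B)))
      < (Re (trace (matrix_inv A)) + Re (trace (matrix_inv B))) / 2"
proof -
  let ?Y = "matrix_inv (midpoint A B)"
  have mid: "Re (trace ?Y) = (inv_trace_minorant A ?Y + inv_trace_minorant B ?Y) / 2"
    using inv_trace_minorant_inv[OF M] by (simp add: inv_trace_minorant_midpoint)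
  have le: "inv_trace_minorant A ?Y \<le> Re (trace (matrix_inv A))"
    "inv_trace_minorant B ?Y \<le> Re (trace (matrix_inv B))"
    using inv_trace_minorant_le A B by blast+
  have "\<not> (inv_trace_minorant A ?Y = Re (trace (matrix_inv A)) \<and>
      inv_trace_minorant B ?Y = Re (trace (matrix_inv B)))"
    using inv_trace_minorant_eq_imp[OF A] inv_trace_minorant_eq_imp[OF B] \<open>A \<noteq> B\<close>
      pos_def_invertible A(2) B(2) matrix_inv_inv by metis
  then have "inv_trace_minorant A ?Y < Re (trace (matrix_inv A)) \<or>
      inv_trace_minorant B ?Y < Re (trace (matrix_inv B))"
    using le by (auto simp: less_le)
  then show ?thesis using mid le by auto
qed

definition outer :: "'n::finite cvec \<Rightarrow> 'n cmat" where
  "outer x = (\<chi> i j. x $ i * cnj (x $ j))"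

lemma trace_outer: "trace (outer x) = of_real ((norm x)^2)"
proof -
  have "trace (outer x) = of_real (\<Sum>i\<in>UNIV. (cmod (x$i))^2)"
    unfolding trace_def outer_def of_real_sum
    by (simp only: vec_lambda_beta complex_norm_square[symmetric] norm_complex_def)
  also have "(\<Sum>i\<in>UNIV. (cmod (x$i))^2) = (norm x)^2"
    by (simp add: norm_vec_def L2_set_def sum_nonneg)
  finally show ?thesis .
qed

lemma inv_trace_minorant_outer:
  "inv_trace_minorant P (t *\<^sub>R outer x) = 2 * t * (norm x)^2 - t^2 * (norm x)^2 * Re (qform P x)"
proof -
  have "conj_transpose (outer x) = outer x"
    by (simp add: conj_transpose_def cnj_mat_def outer_def transpose_def vec_eq_iff)
  then have "conj_transpose (t *\<^sub>R outer x) ** P ** (t *\<^sub>R outer x) =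
      t *\<^sub>R (t *\<^sub>R (outer x ** P ** outer x))"
    by (simp add: conj_transpose_scaleR matrix_scalar_ac scalar_matrix_assoc)
  moreover have "(outer x ** P ** outer x) $ i $ j = qform P x * outer x $ i $ j" for i j
    unfolding outer_def qform_def vdot_def cconj_def
    by (simp add: matrix_matrix_mult_def matrix_vector_mult_def sum_distrib_left sum_distrib_right
        algebra_simps) (rule sum.swap)
  then have "trace (outer x ** P ** outer x) = qform P x * trace (outer x)"
    unfolding trace_def by (simp add: sum_distrib_left)
  ultimately show ?thesis
    by (simp add: inv_trace_minorant_def trace_scaleR trace_outer power2_eq_square algebra_simps)
qed

text \<open>Testing the minorants against rank one matrices \<open>t x x\<^sup>*\<close> and optimising over \<open>t\<close>.\<close>

lemma norm_squared_le_if_minorant_bounded: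
  fixes P :: "'n::finite cmat"
  assumes "\<And>Y. inv_trace_minorant P Y \<le> c"
  shows "(norm x)^2 \<le> c * Re (qform P x)"
proof (cases "x = 0")
  case True then show ?thesis by (simp add: qform_def)
next
  case False
  define n where "n = (norm x)^2"
  define q where "q = Re (qform P x)"
  have "n > 0" unfolding n_def using False by simp
  have g: "2 * t * n - t^2 * n * q \<le> c" for t
    using assms inv_trace_minorant_outer[of P t x] unfolding n_def q_def by metis
  have "q > 0"
  proof (rule ccontr)
    assume "\<not> q > 0"
    then have "((\<bar>c\<bar> + 1) / n)^2 * n * q \<le> 0"
      using \<open>n > 0\<close> by (simp add: mult_nonneg_nonpos)
    then show False
      using g[of "(\<bar>c\<bar> + 1) / n"] \<open>n > 0\<close> by simp
  qed
  have "2 * (1/q) * n - (1/q)^2 * n * q = n / q"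
    using \<open>q > 0\<close> by (simp add: power2_eq_square field_simps)
  then have "n / q \<le> c" using g[of "1/q"] by simp
  then show ?thesis using \<open>q > 0\<close> unfolding n_def q_def by (simp add: field_simps)
qed

lemma pos_def_if_minorant_bounded:
  fixes P :: "'n::finite cmat"
  assumes "\<And>Y. inv_trace_minorant P Y \<le> c"
  shows "pos_def P"
  unfolding pos_def_def
proof (intro allI impI)
  fix x :: "'n cvec" assume "x \<noteq> 0"
  then have "0 < (norm x)^2" by simp
  also have "\<dots> \<le> c * Re (qform P x)"
    by (rule norm_squared_le_if_minorant_bounded[OF assms])
  finally have "0 < c * Re (qform P x)" .
  moreover have "c \<ge> 0" using assms[of 0] by (simp add: inv_trace_minorant_zero)
  ultimately show "Re (qform P x) > 0" by (simp add: zero_less_mult_iff)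
qed

lemma norm_squared_le_trace_inv:
  assumes "conj_transpose P = P" "pos_def P"
  shows "(norm x)^2 \<le> Re (trace (matrix_inv P)) * Re (qform P x)"
  using norm_squared_le_if_minorant_bounded inv_trace_minorant_le[OF assms] by blast

section \<open>Invariant inner products compatible with \<open>\<omega>\<close>\<close>

lemma matrix_vector_mult_axis: "((P::'n::finite cmat) *v axis b 1) $ a = P $ a $ b"
proof -
  have "(P *v axis b 1) $ a = (\<Sum>k\<in>UNIV. (if b = k then 1 else 0) * P $ a $ k)"
    unfolding matrix_vector_mult_def axis_def by (simp add: mult.commute) (rule sum.cong, auto)
  then show ?thesis using sum_if_eq_mult[of b 1 "\<lambda>k. P $ a $ k"] by simp
qed

lemma cconj_axis: "cconj (axis i 1) = axis i 1"
  by (simp add: cconj_def axis_def vec_eq_iff)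

lemma qform_axis: "qform P (axis i 1) = P $ i $ i"
  by (simp add: qform_def cconj_axis vdot_axis matrix_vector_mult_axis)

lemma qform_axis_add: "qform P (axis i 1 + axis j 1) = P$i$i + P$i$j + P$j$i + P$j$j"
  by (simp add: qform_def cconj_add cconj_axis matrix_vector_right_distrib vdot_add_left
      vdot_add_right vdot_axis matrix_vector_mult_axis)

lemma qform_axis_diff: "qform P (axis i 1 - axis j 1) = P$i$i - P$i$j - P$j$i + P$j$j"
  by (simp add: qform_def cconj_diff cconj_axis matrix_vector_mult_diff_distrib vdot_diff_left
      vdot_diff_right vdot_axis matrix_vector_mult_axis)

lemma Re_trace_nonneg:
  assumes "\<And>x. 0 \<le> Re (qform P x)"
  shows "0 \<le> Re (trace P)"
  using assms[of "axis _ 1"] by (simp add: trace_def Re_sum qform_axis sum_nonneg)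

lemma norm_entry_le_trace:
  fixes P :: "'n::finite cmat"
  assumes "real_mat P" "transpose P = P" and psd: "\<And>x. 0 \<le> Re (qform P x)"
  shows "cmod (P $ i $ j) \<le> Re (trace P)"
proof -
  have diag: "0 \<le> Re (P $ k $ k)" for k using psd[of "axis k 1"] by (simp add: qform_axis)
  have diag_le: "Re (P $ k $ k) \<le> Re (trace P)" for k
    unfolding trace_def Re_sum by (rule member_le_sum) (auto simp: diag)
  have "transpose P $ j $ i = P $ i $ j" by (simp add: transpose_def)
  then have "P $ j $ i = P $ i $ j" using assms(2) by simp
  then have "0 \<le> Re (P$i$i) + 2 * Re (P$i$j) + Re (P$j$j)"
    and "0 \<le> Re (P$i$i) - 2 * Re (P$i$j) + Re (P$j$j)"
    using psd[of "axis i 1 + axis j 1"] psd[of "axis i 1 - axis j 1"]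
    by (simp_all add: qform_axis_add qform_axis_diff)
  moreover have "cmod (P $ i $ j) = \<bar>Re (P $ i $ j)\<bar>"
    using assms(1) by (simp add: real_mat_iff_Im cmod_def)
  ultimately show ?thesis using diag_le[of i] diag_le[of j] by linarith
qed

lemma euclidean_form_invertible: "euclidean_form P \<Longrightarrow> invertible P"
  by (simp add: euclidean_form_def pos_def_invertible)

lemma euclidean_form_inv:
  assumes "euclidean_form P"
  shows "euclidean_form (matrix_inv P)"
proof -
  have i: "invertible P" using assms euclidean_form_invertible by blast
  have "transpose (matrix_inv P) ** P = mat 1"
    using assms by (metis euclidean_form_def matrix_inv_right matrix_transpose_mul transpose_mat i)
  then have sym: "transpose (matrix_inv P) = matrix_inv P"
    by (metis matrix_inv_unique_left)
  have "Re (qform (matrix_inv P) x) > 0" if "x \<noteq> 0" for x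
  proof -
    define w where "w = matrix_inv P *v x"
    have x: "x = P *v w" by (simp add: w_def matrix_vector_mul_assoc matrix_inv_right[OF i])
    then have "w \<noteq> 0" using that by auto
    have "qform (matrix_inv P) x = vdot (cconj (P *v w)) w"
      by (simp add: qform_def x matrix_vector_mul_assoc matrix_inv_left[OF i])
    also have "\<dots> = qform P w"
      using assms by (simp add: euclidean_form_def cconj_real_matrix_vector_mult vdot_matrix qform_def)
    finally show ?thesis
      using assms \<open>w \<noteq> 0\<close> by (simp add: euclidean_form_def pos_def_def)
  qed
  then show ?thesis
    using assms i sym by (simp add: euclidean_form_def pos_def_def real_mat_inv)
qed

lemma norm_matrix_inv_le:
  fixes P :: "'n::finite cmat"
  assumes "invertible P" and bound: "\<And>y. (norm y)^2 \<le> c * Re (qform P y)" and "c \<ge> 0"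
  shows "norm (matrix_inv P) \<le> real CARD('n + 'n) * real CARD('n + 'n) * c"
proof (rule norm_le_entrywise_bound)
  fix i j
  define y where "y = matrix_inv P *v axis j 1"
  have "P *v y = axis j 1"
    unfolding y_def by (simp add: matrix_vector_mul_assoc matrix_inv_right[OF assms(1)])
  then have "Re (qform P y) = Re (cnj (y $ j))"
    unfolding qform_def by (simp add: vdot_commute[of _ "axis j 1"] vdot_axis cconj_def)
  also have "\<dots> \<le> norm y"
    using complex_Re_le_cmod[of "cnj (y $ j)"] Finite_Cartesian_Product.norm_nth_le[of y j] by simp
  finally have "(norm y)^2 \<le> c * norm y"
    using bound[of y] \<open>c \<ge> 0\<close> by (meson mult_left_mono order_trans)
  then have "norm y \<le> c"
    by (cases "norm y = 0") (auto simp: power2_eq_square \<open>c \<ge> 0\<close>)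
  moreover have "y $ i = matrix_inv P $ i $ j"
    unfolding y_def by (rule matrix_vector_mult_axis)
  ultimately show "norm (matrix_inv P $ i $ j) \<le> c"
    using Finite_Cartesian_Product.norm_nth_le[of y i] by simp
qed

lemma matrix_inv_diff:
  assumes "invertible P" "invertible Q"
  shows "matrix_inv P - matrix_inv Q = matrix_inv P ** (Q - P) ** matrix_inv (Q::'n::finite cmat)"
  by (simp add: matrix_diff_ldistrib matrix_diff_rdistrib matrix_mul_assoc[symmetric]
      matrix_inv_right matrix_inv_left assms)

lemma norm_trace_le: "cmod (trace A) \<le> real CARD('n::finite) * norm (A::complex^'n^'n)"
proof -
  have "cmod (trace A) \<le> (\<Sum>i\<in>UNIV. cmod (A $ i $ i))"
    unfolding trace_def by (rule norm_sum)
  also have "\<dots> \<le> (\<Sum>i\<in>(UNIV::'n set). norm A)"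
    by (intro sum_mono norm_entry_le)
  finally show ?thesis by simp
qed

text \<open>Written with the minorants, so that closedness is evident; the last condition says
  \<open>Re (trace (matrix_inv P)) \<le> c\<close> (see \<open>bounded_invariant_formsD\<close>).\<close>

definition bounded_invariant_forms :: "'n::finite cmat set \<Rightarrow> real \<Rightarrow> 'n cmat set" where
  "bounded_invariant_forms K c = {P. real_mat P \<and> transpose P = P \<and> (\<forall>g\<in>K. congruence g P = P) \<and>
     Re (trace P) \<le> c \<and> (\<forall>Y. inv_trace_minorant P Y \<le> c)}"

lemma bounded_invariant_formsD:
  assumes "P \<in> bounded_invariant_forms K c"
  shows "euclidean_form P" "\<And>g. g \<in> K \<Longrightarrow> congruence g P = P"
    "Re (trace P) \<le> c" "Re (trace (matrix_inv P)) \<le> c" "\<And>x. (norm x)^2 \<le> c * Re (qform P x)"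
proof -
  have P: "real_mat P" "transpose P = P" "\<And>Y. inv_trace_minorant P Y \<le> c"
    using assms by (auto simp: bounded_invariant_forms_def)
  show "euclidean_form P"
    using P pos_def_if_minorant_bounded by (auto simp: euclidean_form_def)
  then show "Re (trace (matrix_inv P)) \<le> c"
    using inv_trace_minorant_inv conj_transpose_euclidean_form P(3) euclidean_form_def by metis
  show "\<And>x. (norm x)^2 \<le> c * Re (qform P x)"
    using norm_squared_le_if_minorant_bounded P(3) by blast
  show "\<And>g. g \<in> K \<Longrightarrow> congruence g P = P" "Re (trace P) \<le> c"
    using assms by (auto simp: bounded_invariant_forms_def)
qed

lemma bounded_invariant_formsI:
  assumes "euclidean_form P" "\<And>g. g \<in> K \<Longrightarrow> congruence g P = P"
    "Re (trace P) \<le> c" "Re (trace (matrix_inv P)) \<le> c"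
  shows "P \<in> bounded_invariant_forms K c"
proof -
  have "inv_trace_minorant P Y \<le> c" for Y
    using assms(1,4) inv_trace_minorant_le[OF conj_transpose_euclidean_form, of P Y]
    by (simp add: euclidean_form_def)
  then show ?thesis
    using assms by (simp add: bounded_invariant_forms_def euclidean_form_def)
qed

lemma closed_bounded_invariant_forms: "closed (bounded_invariant_forms K c)"
proof -
  have "bounded_invariant_forms K c = (\<Inter>i. \<Inter>j. {P. Im (P $ i $ j) = 0}) \<inter> {P. transpose P = P} \<inter>
      (\<Inter>g\<in>K. {P. congruence g P = P}) \<inter> {P. Re (trace P) \<le> c} \<inter>
      (\<Inter>Y. {P. inv_trace_minorant P Y \<le> c})"
    by (auto simp: bounded_invariant_forms_def real_mat_iff_Im)
  moreover have "closed \<dots>"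
    unfolding congruence_def inv_trace_minorant_def trace_def
    by (intro closed_Int closed_INT ballI closed_Collect_eq closed_Collect_le continuous_intros)
  ultimately show ?thesis by simp
qed

lemma compact_bounded_invariant_forms:
  fixes K :: "'n::finite cmat set"
  shows "compact (bounded_invariant_forms K c)"
proof -
  have "norm P \<le> real CARD('n + 'n) * real CARD('n + 'n) * c"
    if "P \<in> bounded_invariant_forms K c" for P
  proof (rule norm_le_entrywise_bound)
    note P = bounded_invariant_formsD[OF that]
    fix i j
    have "0 \<le> Re (qform P x)" for x
      using P(1) by (simp add: euclidean_form_def pos_def_Re_qform_nonneg)
    then have "norm (P $ i $ j) \<le> Re (trace P)"
      using P(1) unfolding euclidean_form_def by (simp add: norm_entry_le_trace)
    then show "norm (P $ i $ j) \<le> c" using P(3) by simp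
  qed
  then have "bounded (bounded_invariant_forms K c)"
    unfolding bounded_iff by blast
  then show ?thesis
    using closed_bounded_invariant_forms compact_eq_bounded_closed by blast
qed

lemma midpoint_bounded_invariant_forms:
  assumes "A \<in> bounded_invariant_forms K c" "B \<in> bounded_invariant_forms K c"
  shows "midpoint A B \<in> bounded_invariant_forms K c"
proof -
  have "real_mat (midpoint A B)" "transpose (midpoint A B) = midpoint A B"
    using assms by (auto simp: bounded_invariant_forms_def midpoint_def real_mat_scaleR real_mat_add
        transpose_scalar transpose_add)
  moreover have "congruence g (midpoint A B) = midpoint A B" if "g \<in> K" for g
    using assms that by (simp add: bounded_invariant_forms_def midpoint_linear_image[OF linear_congruence, symmetric])
  moreover have "Re (trace (midpoint A B)) \<le> c"
    using assms by (auto simp: bounded_invariant_forms_def midpoint_def trace_scaleR trace_add)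
  moreover have "inv_trace_minorant (midpoint A B) Y \<le> c" for Y
  proof -
    have "inv_trace_minorant A Y \<le> c" "inv_trace_minorant B Y \<le> c"
      using assms by (simp_all add: bounded_invariant_forms_def)
    then show ?thesis by (simp add: inv_trace_minorant_midpoint)
  qed
  ultimately show ?thesis by (auto simp: bounded_invariant_forms_def)
qed

lemma abs_Re_trace_diff_le:
  "\<bar>Re (trace A) - Re (trace B)\<bar> \<le> real CARD('n::finite) * norm (A - B :: complex^'n^'n)"
  using norm_trace_le[of "A - B"] abs_Re_le_cmod[of "trace (A - B)"] by (simp add: trace_sub)

lemma norm_matrix_inv_diff_le:
  fixes P Q :: "'n::finite cmat"
  assumes "invertible P" "invertible Q" "norm (matrix_inv P) \<le> b" "norm (matrix_inv Q) \<le> b"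
  shows "norm (matrix_inv P - matrix_inv Q) \<le> (real CARD('n+'n))^6 * b^2 * norm (P - Q)"
proof -
  let ?k = "(real CARD('n+'n))^3"
  have b: "0 \<le> b" using assms(3) norm_ge_zero[of "matrix_inv P"] by linarith
  have mm: "norm (A ** B) \<le> ?k * (norm A * norm B)" for A B :: "'n cmat"
    using norm_matrix_mult_le[of A B] by (simp add: power3_eq_cube algebra_simps)
  have "norm (matrix_inv P - matrix_inv Q) = norm (matrix_inv P ** (Q - P) ** matrix_inv Q)"
    by (simp add: matrix_inv_diff assms)
  also have "\<dots> \<le> ?k * (norm (matrix_inv P ** (Q - P)) * norm (matrix_inv Q))"
    by (rule mm)
  also have "\<dots> \<le> ?k * ((?k * (norm (matrix_inv P) * norm (Q - P))) * norm (matrix_inv Q))"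
    by (intro mult_left_mono mult_right_mono mm) auto
  also have "\<dots> \<le> ?k * ((?k * (b * norm (Q - P))) * b)"
    by (intro mult_left_mono mult_right_mono mult_mono assms b) (auto simp: b)
  finally show ?thesis
    by (simp add: power2_eq_square norm_minus_commute algebra_simps)
qed

definition trace_energy :: "'n::finite cmat \<Rightarrow> real" where
  "trace_energy P = Re (trace P) + Re (trace (matrix_inv P))"

lemma lipschitz_trace_energy:
  fixes K :: "'n::finite cmat set"
  assumes "c \<ge> 0"
  obtains L where "L-lipschitz_on (bounded_invariant_forms K c) trace_energy"
proof -
  let ?N = "real CARD('n+'n)"
  define L where "L = ?N + ?N * (?N^6 * (?N * ?N * c)^2)"
  have "dist (trace_energy P) (trace_energy Q) \<le> L * dist P Q"
    if P: "P \<in> bounded_invariant_forms K c" and Q: "Q \<in> bounded_invariant_forms K c" for P Q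
  proof -
    note mP = bounded_invariant_formsD[OF P] and mQ = bounded_invariant_formsD[OF Q]
    have i: "invertible P" "invertible Q"
      using mP(1) mQ(1) euclidean_form_invertible by blast+
    have "norm (matrix_inv P - matrix_inv Q) \<le> ?N^6 * (?N * ?N * c)^2 * norm (P - Q)"
      using i mP(5) mQ(5) assms
      by (intro norm_matrix_inv_diff_le norm_matrix_inv_le) auto
    then have "\<bar>Re (trace (matrix_inv P)) - Re (trace (matrix_inv Q))\<bar>
        \<le> ?N * (?N^6 * (?N * ?N * c)^2 * norm (P - Q))"
      using abs_Re_trace_diff_le[of "matrix_inv P" "matrix_inv Q"]
      by (smt (verit) mult_left_mono of_nat_0_le_iff)
    then show ?thesis
      using abs_Re_trace_diff_le[of P Q]
      by (simp add: trace_energy_def dist_real_def dist_norm L_def algebra_simps)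
  qed
  moreover have "L \<ge> 0" unfolding L_def using assms by simp
  ultimately show thesis by (intro that lipschitz_onI)
qed

lemma trace_energy_midpoint_less:
  assumes "euclidean_form A" "euclidean_form B" "A \<noteq> B"
  shows "trace_energy (midpoint A B) < (trace_energy A + trace_energy B) / 2"
proof -
  have "midpoint A B \<in> closed_segment A B"
    by (rule midpoint_in_closed_segment)
  then have "euclidean_form (midpoint A B)"
    using assms convex_euclidean_forms[unfolded convex_contains_segment] by blast
  then have "Re (trace (matrix_inv (midpoint A B)))
      < (Re (trace (matrix_inv A)) + Re (trace (matrix_inv B))) / 2"
    using assms by (intro Re_trace_inv_midpoint_less)
      (auto simp: conj_transpose_euclidean_form euclidean_form_def)
  then show ?thesis
    by (simp add: trace_energy_def midpoint_def trace_scaleR trace_add field_simps)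
qed

text \<open>The form dual to \<open>P\<close>, transported by \<open>\<omega>\<close>; \<open>P\<close> is a fixed point exactly when
  \<open>J = P\<^sup>-\<^sup>1 \<Omega>\<close> satisfies \<open>J\<^sup>2 = -1\<close>.\<close>

definition omega_dual :: "'n::finite cmat \<Rightarrow> 'n cmat" where
  "omega_dual P = congruence Omega_mat (matrix_inv P)"

lemma congruence_fixed_inv:
  fixes g P :: "'n::finite cmat"
  assumes "invertible g" "invertible P" "congruence g P = P"
  shows "g ** matrix_inv P ** transpose g = matrix_inv P"
proof -
  have "transpose g ** P = transpose g ** P ** (g ** matrix_inv g)"
    by (simp add: matrix_inv_right[OF assms(1)])
  also have "\<dots> = P ** matrix_inv g"
    using assms(3) by (simp add: congruence_def matrix_mul_assoc)
  finally have gP: "transpose g ** P = P ** matrix_inv g" .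
  have "(g ** matrix_inv P ** transpose g) ** P = (g ** matrix_inv P) ** (transpose g ** P)"
    by (simp add: matrix_mul_assoc)
  also have "\<dots> = g ** (matrix_inv P ** P) ** matrix_inv g"
    by (simp add: gP matrix_mul_assoc)
  also have "\<dots> = mat 1"
    by (simp add: matrix_inv_left[OF assms(2)] matrix_inv_right[OF assms(1)])
  finally show ?thesis by (metis matrix_inv_unique_left)
qed

lemma congruence_omega_dual:
  fixes g P :: "'n::finite cmat"
  assumes g: "symplectic g" and "invertible P" "congruence g P = P"
  shows "congruence g (omega_dual P) = omega_dual P"
proof -
  have q: "g ** matrix_inv P ** transpose g = matrix_inv P"
    using congruence_fixed_inv symplectic_invertible assms by blast
  have "transpose g ** transpose Omega_mat ** g = transpose Omega_mat"
    using arg_cong[OF g[unfolded symplectic_def], of transpose]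
    by (simp add: matrix_transpose_mul matrix_mul_assoc)
  then have "congruence g (omega_dual P) =
      transpose g ** transpose Omega_mat ** (g ** matrix_inv P ** transpose g) ** Omega_mat ** g"
    by (simp add: congruence_def omega_dual_def q matrix_mul_assoc)
  also have "\<dots> =
      (transpose g ** transpose Omega_mat ** g) ** matrix_inv P ** (transpose g ** Omega_mat ** g)"
    by (simp add: matrix_mul_assoc)
  also have "\<dots> = omega_dual P"
    using g \<open>transpose g ** transpose Omega_mat ** g = transpose Omega_mat\<close>
    by (simp add: symplectic_def omega_dual_def congruence_def)
  finally show ?thesis .
qed

lemma trace_congruence_Omega_mat: "trace (congruence Omega_mat X) = trace (X::'n::finite cmat)"
proof -
  have "trace (congruence Omega_mat X) = trace (transpose Omega_mat ** (X ** Omega_mat))"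
    by (simp add: congruence_def matrix_mul_assoc)
  also have "\<dots> = trace ((X ** Omega_mat) ** transpose Omega_mat)"
    by (rule trace_mul_sym)
  also have "\<dots> = trace X"
    by (simp add: matrix_mul_assoc[symmetric] Omega_mat_orthogonal)
  finally show ?thesis .
qed

lemma matrix_inv_omega_dual:
  assumes "invertible (P::'n::finite cmat)"
  shows "matrix_inv (omega_dual P) = congruence Omega_mat P"
proof (rule matrix_inv_unique_right)
  have "omega_dual P ** congruence Omega_mat P =
      transpose Omega_mat ** matrix_inv P ** (Omega_mat ** transpose Omega_mat) ** P ** Omega_mat"
    by (simp add: omega_dual_def congruence_def matrix_mul_assoc)
  then show "omega_dual P ** congruence Omega_mat P = mat 1"
    by (simp add: Omega_mat_orthogonal matrix_mul_assoc matrix_inv_left[OF assms])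
       (simp add: matrix_mul_assoc[symmetric] matrix_inv_left[OF assms] Omega_mat_orthogonal)
qed

lemma trace_omega_dual: "trace (omega_dual P) = trace (matrix_inv P)"
  by (simp add: omega_dual_def trace_congruence_Omega_mat)

lemma trace_inv_omega_dual: "invertible P \<Longrightarrow> trace (matrix_inv (omega_dual P)) = trace P"
  by (simp add: matrix_inv_omega_dual trace_congruence_Omega_mat)

lemma trace_energy_omega_dual:
  "invertible P \<Longrightarrow> trace_energy (omega_dual P) = trace_energy P"
  by (simp add: trace_energy_def trace_omega_dual trace_inv_omega_dual)

lemma omega_dual_bounded_invariant_forms:
  assumes K: "\<And>g. g \<in> K \<Longrightarrow> symplectic g" and P: "P \<in> bounded_invariant_forms K c"
  shows "omega_dual P \<in> bounded_invariant_forms K c"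
proof (rule bounded_invariant_formsI)
  note m = bounded_invariant_formsD[OF P]
  have i: "invertible P" using m(1) euclidean_form_invertible by blast
  show "euclidean_form (omega_dual P)"
    unfolding omega_dual_def
    by (intro euclidean_form_congruence euclidean_form_inv m(1) real_mat_Omega_mat Omega_mat_invertible)
  show "congruence g (omega_dual P) = omega_dual P" if "g \<in> K" for g
    using congruence_omega_dual K that i m(2) by blast
  show "Re (trace (omega_dual P)) \<le> c" "Re (trace (matrix_inv (omega_dual P))) \<le> c"
    using m(3,4) by (simp_all add: trace_omega_dual trace_inv_omega_dual[OF i])
qed

text \<open>Minimise \<open>trace_energy\<close>, which \<open>omega_dual\<close> preserves, over the compact convex set of
  \<open>K\<close>-invariant forms with bounded traces; by strict convexity the minimiser is fixed by
  \<open>omega_dual\<close>.\<close>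

theorem compact_symplectic_group_invariant_form:
  fixes K :: "'n::finite cmat set"
  assumes K: "compact K" "matgroup K" "K \<subseteq> SpR"
  obtains P where "euclidean_form P" "\<And>g. g \<in> K \<Longrightarrow> congruence g P = P" "omega_dual P = P"
proof -
  have K_SpR: "\<And>g. g \<in> K \<Longrightarrow> real_mat g \<and> symplectic g"
    using K(3) by (auto simp: SpR_iff)
  obtain P1 where P1: "euclidean_form P1" "\<And>g. g \<in> K \<Longrightarrow> congruence g P1 = P1"
    using compact_group_invariant_form K(1,2) K_SpR by metis
  have "0 \<le> Re (trace Q)" if "euclidean_form Q" for Q :: "'n cmat"
    using that by (intro Re_trace_nonneg pos_def_Re_qform_nonneg) (simp add: euclidean_form_def)
  then have traces: "0 \<le> Re (trace P1)" "0 \<le> Re (trace (matrix_inv P1))"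
    using P1(1) euclidean_form_inv by blast+
  define c where "c = Re (trace P1) + Re (trace (matrix_inv P1))"
  define S where "S = bounded_invariant_forms K c"
  have "P1 \<in> S"
    unfolding S_def c_def using P1 traces by (intro bounded_invariant_formsI) auto
  moreover have "c \<ge> 0" unfolding c_def using traces by simp
  ultimately obtain P where P: "P \<in> S" and P_min: "\<And>Q. Q \<in> S \<Longrightarrow> trace_energy P \<le> trace_energy Q"
    using continuous_attains_inf[OF compact_bounded_invariant_forms] lipschitz_trace_energy
    unfolding S_def by (metis empty_iff lipschitz_on_continuous_on)
  note P_props = bounded_invariant_formsD[OF P[unfolded S_def]]
  have "omega_dual P = P"
  proof (rule ccontr)
    assume ne: "omega_dual P \<noteq> P"
    have D: "omega_dual P \<in> S"
      using omega_dual_bounded_invariant_forms K_SpR P unfolding S_def by blast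
    have "trace_energy (midpoint P (omega_dual P)) < trace_energy P"
      using trace_energy_midpoint_less[OF P_props(1) bounded_invariant_formsD(1)[OF D[unfolded S_def]]] ne
        trace_energy_omega_dual[OF euclidean_form_invertible[OF P_props(1)]] by simp
    moreover have "midpoint P (omega_dual P) \<in> S"
      using P D unfolding S_def by (rule midpoint_bounded_invariant_forms)
    ultimately show False using P_min by fastforce
  qed
  then show thesis using P_props that by blast
qed

section \<open>Maximal compact subgroups of the real symplectic group\<close>

definition compatible_structure :: "'n::finite cmat \<Rightarrow> 'n cmat \<Rightarrow> bool" where
  "compatible_structure P J \<longleftrightarrow>
     euclidean_form P \<and> real_mat J \<and> symplectic J \<and> J ** J = - mat 1 \<and> P ** J = Omega_mat"

lemma compatible_structure_omega_dual_fixed: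
  assumes P: "euclidean_form P" "omega_dual P = P"
  shows "compatible_structure P (matrix_inv P ** Omega_mat)"
proof -
  let ?Q = "matrix_inv P"
  have i: "invertible P" using P(1) euclidean_form_invertible by blast
  have Q: "real_mat ?Q" "transpose ?Q = ?Q"
    using euclidean_form_inv[OF P(1)] by (auto simp: euclidean_form_def)
  have e0: "transpose Omega_mat ** ?Q ** Omega_mat = P"
    using P(2) by (simp add: omega_dual_def congruence_def)
  then have e1: "?Q ** Omega_mat = Omega_mat ** P"
    by (metis Omega_mat_orthogonal(1) matrix_mul_assoc matrix_mul_lid)
  have "?Q ** Omega_mat ** (?Q ** Omega_mat) = (Omega_mat ** P) ** (?Q ** Omega_mat)"
    by (simp only: e1)
  also have "\<dots> = Omega_mat ** (P ** ?Q) ** Omega_mat"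
    by (simp add: matrix_mul_assoc)
  finally have "?Q ** Omega_mat ** (?Q ** Omega_mat) = - mat 1"
    by (simp add: matrix_inv_right[OF i] Omega_mat_squared)
  moreover have "transpose (?Q ** Omega_mat) ** Omega_mat ** (?Q ** Omega_mat) = Omega_mat"
    using e0 Q(2) by (simp add: matrix_transpose_mul matrix_mul_assoc matrix_inv_right[OF i])
  ultimately show ?thesis
    using P(1) Q(1) by (simp add: compatible_structure_def symplectic_def real_mat_mult
        real_mat_Omega_mat matrix_mul_assoc matrix_inv_right[OF i])
qed

definition SpR_centralizer :: "'n::finite cmat \<Rightarrow> 'n cmat set" where
  "SpR_centralizer J = {g. real_mat g \<and> symplectic g \<and> g ** J = J ** g}"

lemma SpR_centralizer_subset: "SpR_centralizer J \<subseteq> SpR"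
  by (auto simp: SpR_centralizer_def SpR_iff)

lemma matgroup_SpR_centralizer: "matgroup (SpR_centralizer J)"
  unfolding matgroup_def
proof (intro conjI ballI)
  show "mat 1 \<in> SpR_centralizer J"
    by (simp add: SpR_centralizer_def real_mat_mat1 symplectic_mat1)
  fix x y assume "x \<in> SpR_centralizer J" "y \<in> SpR_centralizer J"
  then show "x ** y \<in> SpR_centralizer J"
    unfolding SpR_centralizer_def
    by (auto simp: real_mat_mult symplectic_mult) (metis matrix_mul_assoc)
next
  fix x assume "x \<in> SpR_centralizer J"
  then have x: "real_mat x" "symplectic x" "x ** J = J ** x"
    by (auto simp: SpR_centralizer_def)
  then have i: "invertible x" using symplectic_invertible by blast
  have "matrix_inv x ** J = matrix_inv x ** (J ** x) ** matrix_inv x"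
    by (simp add: matrix_mul_assoc[symmetric] matrix_inv_right[OF i])
  also have "\<dots> = J ** matrix_inv x"
    by (simp add: x(3)[symmetric] matrix_mul_assoc matrix_inv_left[OF i])
  finally show "matrix_inv x \<in> SpR_centralizer J"
    using real_mat_inv[OF x(1) i] symplectic_inv[OF x(2)] by (simp add: SpR_centralizer_def)
  show "invertible x" by (rule i)
qed

lemma closed_SpR_centralizer: "closed (SpR_centralizer J)"
proof -
  have "SpR_centralizer J = (\<Inter>i. \<Inter>j. {g. Im (g $ i $ j) = 0}) \<inter>
      {g. transpose g ** Omega_mat ** g = Omega_mat} \<inter> {g. g ** J = J ** g}"
    by (auto simp: SpR_centralizer_def symplectic_def real_mat_iff_Im)
  moreover have "closed \<dots>"
    by (intro closed_Int closed_INT ballI closed_Collect_eq continuous_intros)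
  ultimately show ?thesis by simp
qed

lemma congruence_SpR_centralizer:
  assumes "compatible_structure P J" "g \<in> SpR_centralizer J"
  shows "congruence g P = P"
proof -
  have J: "J ** J = - mat 1" "P ** J = Omega_mat"
    and g: "symplectic g" "g ** J = J ** g"
    using assms by (auto simp: compatible_structure_def SpR_centralizer_def)
  have "P = - (Omega_mat ** J)"
    using arg_cong[OF J(2), of "\<lambda>X. X ** J"]
    by (simp add: matrix_mul_assoc[symmetric] J(1) matrix_mul_minus_right) (metis minus_minus)
  then have "congruence g P = - (transpose g ** Omega_mat ** (J ** g))"
    by (simp add: congruence_def matrix_mul_minus_left matrix_mul_minus_right matrix_mul_assoc)
  also have "\<dots> = - ((transpose g ** Omega_mat ** g) ** J)"
    by (simp add: g(2)[symmetric] matrix_mul_assoc)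
  also have "\<dots> = P"
    using g(1) \<open>P = - (Omega_mat ** J)\<close> by (simp add: symplectic_def)
  finally show ?thesis .
qed

text \<open>Elements of the centralizer are isometries of \<open>P\<close>, which dominates the Euclidean norm.\<close>

lemma bounded_SpR_centralizer:
  fixes J :: "'n::finite cmat"
  assumes "compatible_structure P J"
  shows "bounded (SpR_centralizer J)"
proof -
  define c where "c = Re (trace (matrix_inv P))"
  have P: "euclidean_form P" using assms by (simp add: compatible_structure_def)
  have c: "0 \<le> c" "\<And>x. (norm x)^2 \<le> c * Re (qform P x)"
    using norm_squared_le_trace_inv[OF conj_transpose_euclidean_form[OF P]] P
      inv_trace_minorant_le[OF conj_transpose_euclidean_form[OF P], of 0]
    by (auto simp: c_def euclidean_form_def inv_trace_minorant_zero)
  have "norm g \<le> real CARD('n + 'n) * real CARD('n + 'n) * (c * norm P + 1)"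
    if g: "g \<in> SpR_centralizer J" for g
  proof (rule norm_le_entrywise_bound)
    fix i j
    define y where "y = g *v axis j 1"
    have "(norm y)^2 \<le> c * Re (qform P y)" by (rule c(2))
    also have "qform P y = P $ j $ j"
      using g qform_congruence[of g P "axis j 1"] congruence_SpR_centralizer[OF assms g]
      by (simp add: y_def SpR_centralizer_def qform_axis)
    also have "c * Re (P $ j $ j) \<le> c * norm P"
      using c(1) complex_Re_le_cmod[of "P$j$j"] norm_entry_le[of P j j] by (intro mult_left_mono) auto
    finally have "(norm y)^2 \<le> c * norm P" .
    moreover have "norm y \<le> (norm y)^2" if "1 \<le> norm y"
      using that mult_left_mono[of 1 "norm y" "norm y"] by (simp add: power2_eq_square)
    ultimately have "norm y \<le> c * norm P + 1"
      using mult_nonneg_nonneg[OF c(1) norm_ge_zero[of P]] by (cases "norm y \<le> 1") auto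
    then show "norm (g $ i $ j) \<le> c * norm P + 1"
      using Finite_Cartesian_Product.norm_nth_le[of y i] matrix_vector_mult_axis[of g j i]
      by (simp add: y_def)
  qed
  then show ?thesis unfolding bounded_iff by blast
qed

lemma commute_inv_mult_Omega_mat:
  assumes "pos_def P" "symplectic g" "congruence g P = P"
  shows "g ** (matrix_inv P ** Omega_mat) = (matrix_inv P ** Omega_mat) ** g"
proof -
  have "g ** matrix_inv P ** transpose g = matrix_inv P"
    using congruence_fixed_inv assms symplectic_invertible pos_def_invertible by blast
  then have "(matrix_inv P ** Omega_mat) ** g =
      (g ** matrix_inv P ** transpose g) ** Omega_mat ** g"
    by simp
  also have "\<dots> = g ** matrix_inv P ** (transpose g ** Omega_mat ** g)"
    by (simp add: matrix_mul_assoc)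
  also have "\<dots> = g ** (matrix_inv P ** Omega_mat)"
    using assms(2) by (simp add: symplectic_def matrix_mul_assoc)
  finally show ?thesis ..
qed

theorem max_compact_subgroup_eq_centralizer:
  assumes "max_compact_subgroup K"
  obtains P J where "compatible_structure P J" "K = SpR_centralizer J"
proof -
  have K: "K \<subseteq> SpR" "matgroup K" "compact K"
    and K_max: "\<And>H. H \<subseteq> SpR \<Longrightarrow> matgroup H \<Longrightarrow> compact H \<Longrightarrow> K \<subseteq> H \<Longrightarrow> H = K"
    using assms unfolding max_compact_subgroup_def by blast+
  obtain P where P: "euclidean_form P" "\<And>g. g \<in> K \<Longrightarrow> congruence g P = P" "omega_dual P = P"
    using compact_symplectic_group_invariant_form K(3,2,1) by blast
  define J where "J = matrix_inv P ** Omega_mat"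
  have PJ: "compatible_structure P J"
    unfolding J_def using P by (intro compatible_structure_omega_dual_fixed)
  have "K \<subseteq> SpR_centralizer J"
  proof
    fix g assume "g \<in> K"
    then have g: "real_mat g" "symplectic g" using K(1) by (auto simp: SpR_iff)
    then have "g ** J = J ** g"
      unfolding J_def using commute_inv_mult_Omega_mat[of P g] P(1) P(2)[OF \<open>g \<in> K\<close>]
      by (simp add: euclidean_form_def)
    with g show "g \<in> SpR_centralizer J" by (simp add: SpR_centralizer_def)
  qed
  moreover have "compact (SpR_centralizer J)"
    using bounded_SpR_centralizer[OF PJ] closed_SpR_centralizer compact_eq_bounded_closed by blast
  ultimately have "SpR_centralizer J = K"
    using K_max SpR_centralizer_subset matgroup_SpR_centralizer by blast
  then show thesis using PJ that by blast
qed

section \<open>Exponentials and the complexification\<close>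

lemma mpow_scaleR: "mpow (r *\<^sub>R X) k = (r^k) *\<^sub>R mpow X k"
  by (induction k) (simp_all add: scalar_matrix_assoc[symmetric] matrix_scalar_ac mult.commute)

lemma mpow_complex_structure:
  assumes "J ** J = - mat 1"
  shows "mpow J k = (-1)^(k div 2) *\<^sub>R (if even k then mat 1 else J)"
proof (induction k)
  case (Suc k)
  then show ?case
    using assms by (cases "even k")
      (auto simp: matrix_scalar_ac scalar_matrix_assoc[symmetric] matrix_mul_assoc elim: oddE)
qed simp

lemma mexp_complex_structure:
  fixes J :: "'n::finite cmat"
  assumes "J ** J = - mat 1"
  shows "mexp (t *\<^sub>R J) = cos t *\<^sub>R mat 1 + sin t *\<^sub>R J"
proof -
  have "inverse (fact k) *\<^sub>R mpow (t *\<^sub>R J) k = (cos_coeff k * t^k) *\<^sub>R mat 1 + (sin_coeff k * t^k) *\<^sub>R J" for k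
    by (cases "even k")
      (auto simp: mpow_scaleR mpow_complex_structure[OF assms] cos_coeff_def sin_coeff_def
        field_simps elim!: oddE)
  moreover have "(\<lambda>k. (cos_coeff k * t^k) *\<^sub>R mat 1 + (sin_coeff k * t^k) *\<^sub>R J)
      sums (cos t *\<^sub>R mat 1 + sin t *\<^sub>R (J::'n::finite cmat))"
    using cos_converges[of t] sin_converges[of t] by (intro sums_add sums_scaleR_left) simp_all
  ultimately show ?thesis
    unfolding mexp_def by (simp add: sums_iff)
qed

lemma mpow_involution:
  assumes "A ** A = mat 1"
  shows "mpow A k = (if even k then mat 1 else A)"
  by (induction k) (auto simp: assms matrix_mul_assoc)

lemma scaleR_half_add_diff:
  fixes A B :: "'a::real_vector"
  shows "(1/2) *\<^sub>R (A + B) + (1/2) *\<^sub>R (A - B) = A"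
    and "(1/2) *\<^sub>R (A + B) - (1/2) *\<^sub>R (A - B) = B"
proof -
  have "(1/2) *\<^sub>R (A + B) + (1/2) *\<^sub>R (A - B) = (1/2) *\<^sub>R (A + A)"
    by (simp add: scaleR_add_right[symmetric])
  then show "(1/2) *\<^sub>R (A + B) + (1/2) *\<^sub>R (A - B) = A"
    by (simp add: scaleR_2[symmetric])
  have "(1/2) *\<^sub>R (A + B) - (1/2) *\<^sub>R (A - B) = (1/2) *\<^sub>R (B + B)"
    by (simp add: scaleR_diff_right[symmetric])
  then show "(1/2) *\<^sub>R (A + B) - (1/2) *\<^sub>R (A - B) = B"
    by (simp add: scaleR_2[symmetric])
qed

lemma mexp_scaleR_involution:
  fixes A :: "'n::finite cmat"
  assumes "A ** A = mat 1"
  shows "mexp (s *\<^sub>R A) =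
    exp s *\<^sub>R ((1/2) *\<^sub>R (mat 1 + A)) + exp (- s) *\<^sub>R ((1/2) *\<^sub>R (mat 1 - A))"
proof -
  let ?P = "(1/2) *\<^sub>R (mat 1 + A)" and ?Q = "(1/2) *\<^sub>R (mat 1 - A)"
  have "inverse (fact k) *\<^sub>R mpow (s *\<^sub>R A) k
      = (s^k /\<^sub>R fact k) *\<^sub>R ?P + ((-s)^k /\<^sub>R fact k) *\<^sub>R ?Q" for k
  proof -
    let ?c = "s^k /\<^sub>R fact k"
    have "inverse (fact k) *\<^sub>R mpow (s *\<^sub>R A) k = ?c *\<^sub>R mpow A k"
      by (simp add: mpow_scaleR)
    moreover have "?c *\<^sub>R ?P + ((-s)^k /\<^sub>R fact k) *\<^sub>R ?Q = ?c *\<^sub>R mpow A k"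
    proof (cases "even k")
      case True
      then have "?c *\<^sub>R ?P + ((-s)^k /\<^sub>R fact k) *\<^sub>R ?Q = ?c *\<^sub>R (?P + ?Q)"
        by (simp only: power_minus_even scaleR_add_right)
      then show ?thesis
        using True by (simp only: scaleR_half_add_diff(1) mpow_involution[OF assms] if_True)
    next
      case False
      then have "?c *\<^sub>R ?P + ((-s)^k /\<^sub>R fact k) *\<^sub>R ?Q = ?c *\<^sub>R (?P - ?Q)"
        by (simp add: scaleR_diff_right)
      then show ?thesis
        using False by (simp only: scaleR_half_add_diff(2) mpow_involution[OF assms] if_False)
    qed
    ultimately show ?thesis by simp
  qed
  moreover have "(\<lambda>k. (s^k /\<^sub>R fact k) *\<^sub>R ?P + ((-s)^k /\<^sub>R fact k) *\<^sub>R ?Q)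
      sums (exp s *\<^sub>R ?P + exp (-s) *\<^sub>R ?Q)"
    using exp_converges[of s] exp_converges[of "-s"] by (intro sums_add sums_scaleR_left)
  ultimately show ?thesis
    unfolding mexp_def by (simp add: sums_iff)
qed

definition imag_mat :: "'n::finite cmat \<Rightarrow> 'n cmat" where
  "imag_mat J = (\<chi> i j. \<i> * J $ i $ j)"

lemma imag_mat_squared:
  assumes "J ** J = - mat 1"
  shows "imag_mat J ** imag_mat J = mat 1"
proof -
  have "(imag_mat J ** imag_mat J) $ i $ j = - ((J ** J) $ i $ j)" for i j
    by (simp add: imag_mat_def matrix_matrix_mult_def sum_negf[symmetric] algebra_simps)
  then show ?thesis using assms by (simp add: vec_eq_iff)
qed

lemma imag_mat_vector_mult: "imag_mat J *v x = \<i> *s (J *v x)"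
  by (simp add: imag_mat_def matrix_vector_mult_def vec_eq_iff sum_distrib_left mult.assoc)

lemma symplectic_cos_sin:
  assumes J: "symplectic J" "J ** J = - mat 1" and ab: "a^2 + b^2 = 1"
  shows "symplectic (a *\<^sub>R mat 1 + b *\<^sub>R J)"
  unfolding symplectic_iff_preserves_omega
proof (intro allI)
  fix v w
  have JJ: "omega (J *v v) (J *v w) = omega v w" for v w
    using J(1) by (simp add: symplectic_iff_preserves_omega)
  have "omega (J *v v) w = omega (J *v (J *v v)) (J *v w)"
    by (rule JJ[symmetric])
  also have "\<dots> = - omega v (J *v w)"
    by (simp add: matrix_vector_mul_assoc J(2) matrix_vector_mult_minus omega_minus_left)
  finally have "omega (J *v v) w = - omega v (J *v w)" .
  moreover have "of_real a * of_real a + of_real b * of_real b = (1::complex)"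
    using ab by (metis of_real_1 of_real_add of_real_mult power2_eq_square)
  ultimately show "omega ((a *\<^sub>R mat 1 + b *\<^sub>R J) *v v) ((a *\<^sub>R mat 1 + b *\<^sub>R J) *v w) = omega v w"
    by (simp add: matrix_vector_mult_add_rdistrib scaleR_matrix_vector_mult scaleR_eq_smult
        omega_add_left omega_add_right omega_smult_left omega_smult_right JJ algebra_simps)
       (metis distrib_right mult_1 mult.assoc)
qed

lemma lie_algebra_SpR_centralizer:
  assumes J: "real_mat J" "symplectic J" "J ** J = - mat 1"
  shows "s *\<^sub>R J \<in> lie_algebra (SpR_centralizer J)"
  unfolding lie_algebra_def
proof (intro CollectI allI)
  fix t :: real
  have "(cos (t * s))^2 + (sin (t * s))^2 = 1" by simp
  then have "symplectic (cos (t * s) *\<^sub>R mat 1 + sin (t * s) *\<^sub>R J)"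
    using J symplectic_cos_sin by blast
  moreover have "(cos (t * s) *\<^sub>R mat 1 + sin (t * s) *\<^sub>R J) ** J =
      J ** (cos (t * s) *\<^sub>R mat 1 + sin (t * s) *\<^sub>R J)"
    by (simp add: matrix_add_ldistrib matrix_add_rdistrib matrix_scalar_ac
        scalar_matrix_assoc[symmetric])
  ultimately have "cos (t * s) *\<^sub>R mat 1 + sin (t * s) *\<^sub>R J \<in> SpR_centralizer J"
    using J by (simp add: SpR_centralizer_def real_mat_add real_mat_scaleR real_mat_mat1)
  then show "mexp (t *\<^sub>R (s *\<^sub>R J)) \<in> SpR_centralizer J"
    using mexp_complex_structure[OF J(3), of "t * s"] by simp
qed

lemma mexp_imag_mem_complexification:
  fixes J :: "'n::finite cmat"
  assumes J: "real_mat J" "symplectic J" "J ** J = - mat 1"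
  shows "mexp (s *\<^sub>R imag_mat J) \<in> complexification (SpR_centralizer J)"
proof -
  have "(\<chi> i j. \<i> * (s *\<^sub>R J) $ i $ j) = s *\<^sub>R imag_mat J"
  proof -
    have "(s *\<^sub>R B) $ i $ j = of_real s * B $ i $ j" for B :: "'n::finite cmat" and i j
      by (metis vector_scaleR_component scaleR_conv_of_real)
    then show ?thesis by (simp add: imag_mat_def vec_eq_iff) (simp add: scaleR_conv_of_real)
  qed
  moreover have "mat 1 \<in> SpR_centralizer J"
    using matgroup_SpR_centralizer[of J] unfolding matgroup_def by blast
  ultimately show ?thesis
    unfolding complexification_def using lie_algebra_SpR_centralizer[OF J]
    by (intro CollectI exI[of _ "mat 1"] exI[of _ "s *\<^sub>R J"]) simp
qed

section \<open>The base cycle of \<open>D\<^sub>m\<^sub>,\<^sub>a\<close>\<close>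

lemma herm_add_left: "herm (x + y) z = herm x z + herm y z"
  by (simp add: herm_def omega_add_left algebra_simps)

lemma herm_add_right: "herm z (x + y) = herm z x + herm z y"
  by (simp add: herm_def cconj_add omega_add_right algebra_simps)

lemma herm_smult_left: "herm (c *s x) z = c * herm x z"
  by (simp add: herm_def omega_smult_left)

lemma herm_smult_right: "herm z (c *s x) = cnj c * herm z x"
  by (simp add: herm_def cconj_smult omega_smult_right)

lemma herm_scaleR_add_expand:
  "herm (r *\<^sub>R x + q *\<^sub>R y) (r *\<^sub>R x + q *\<^sub>R y) =
     of_real (r * r) * herm x x + of_real (r * q) * (herm x y + herm y x) + of_real (q * q) * herm y y"
  by (simp add: scaleR_eq_smult herm_add_left herm_add_right herm_smult_left herm_smult_right
      algebra_simps)

lemma herm_SpR: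
  assumes "g \<in> SpR"
  shows "herm (g *v x) (g *v y) = herm x y"
  using assms by (simp add: herm_def SpR_iff cconj_real_matrix_vector_mult symplectic_iff_preserves_omega)

lemma herm_zero_left [simp]: "herm 0 z = 0"
  and herm_zero_right [simp]: "herm z 0 = 0"
  by (simp_all add: herm_def omega_eq_vdot)

lemma herm_sum_left: "finite B \<Longrightarrow> herm (\<Sum>b\<in>B. f b) z = (\<Sum>b\<in>B. herm (f b) z)"
  by (induction B rule: finite_induct) (simp_all add: herm_add_left)

lemma herm_sum_right: "finite B \<Longrightarrow> herm z (\<Sum>b\<in>B. f b) = (\<Sum>b\<in>B. herm z (f b))"
  by (induction B rule: finite_induct) (simp_all add: herm_add_right)

lemma herm_signature_nonpos:
  assumes "herm_signature V 0 m" and "x \<in> V"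
  shows "Re (herm x x) \<le> 0"
proof -
  obtain B where B: "finite B" "vec.span B = V" "\<forall>b\<in>B. \<forall>b'\<in>B. b \<noteq> b' \<longrightarrow> herm b b' = 0"
    "card {b\<in>B. Re (herm b b) > 0} = 0"
    using assms(1) unfolding herm_signature_def by blast
  then have nonpos: "Re (herm b b) \<le> 0" if "b \<in> B" for b
    using that by (auto simp: not_less)
  obtain u where x: "x = (\<Sum>b\<in>B. u b *s b)"
    using assms(2) B(1,2) vec.span_finite[OF B(1)] by auto
  have "herm x x = (\<Sum>b\<in>B. \<Sum>c\<in>B. u b * cnj (u c) * herm b c)"
    unfolding x
    by (simp add: herm_sum_left herm_sum_right B(1) herm_smult_left herm_smult_right
        sum_distrib_left algebra_simps) (rule sum.swap)
  also have "\<dots> = (\<Sum>b\<in>B. u b * cnj (u b) * herm b b)"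
  proof (rule sum.cong[OF refl])
    fix b assume "b \<in> B"
    then have "(\<Sum>c\<in>B. u b * cnj (u c) * herm b c) =
        (\<Sum>c\<in>B. if c = b then u b * cnj (u b) * herm b b else 0)"
      using B(3) by (intro sum.cong) auto
    then show "(\<Sum>c\<in>B. u b * cnj (u c) * herm b c) = u b * cnj (u b) * herm b b"
      using \<open>b \<in> B\<close> B(1) by simp
  qed
  finally have "Re (herm x x) = (\<Sum>b\<in>B. (cmod (u b))^2 * Re (herm b b))"
    by (simp add: Re_sum complex_norm_square[symmetric])
  also have "\<dots> \<le> 0"
    by (intro sum_nonpos mult_nonneg_nonpos nonpos) auto
  finally show ?thesis .
qed

lemma exists_exp_quadratic_pos:
  fixes A C B :: real
  assumes "B > 0"
  obtains s where "exp s * exp s * A + C + exp (- s) * exp (- s) * B > 0"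
proof -
  define R where "R = (\<bar>A\<bar> + \<bar>C\<bar> + 1) / B + 1"
  have "R \<ge> 1" unfolding R_def using assms by simp
  define s where "s = - ln R / 2"
  have "exp (- s) * exp (- s) = R"
    using \<open>R \<ge> 1\<close> by (simp add: s_def exp_add[symmetric])
  moreover have "R * B = \<bar>A\<bar> + \<bar>C\<bar> + 1 + B"
    unfolding R_def using assms by (simp add: field_simps)
  moreover have "\<bar>exp s * exp s * A\<bar> \<le> \<bar>A\<bar>"
  proof -
    have "exp s * exp s = 1 / R"
      using \<open>R \<ge> 1\<close> by (simp add: s_def exp_add[symmetric] exp_minus inverse_eq_divide)
    then have "exp s * exp s \<le> 1" using \<open>R \<ge> 1\<close> by simp
    then show ?thesis
      by (simp add: abs_mult mult_left_le_one_le)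
  qed
  ultimately have "exp s * exp s * A + C + exp (- s) * exp (- s) * B > 0"
    using assms by (simp add: abs_le_iff) linarith
  then show thesis by (rule that)
qed

lemma herm_eq_qform_of_eigenvector:
  assumes PJ: "compatible_structure P J" and b: "J *v b = \<i> *s b"
  shows "herm b b = qform P b"
proof -
  have J: "real_mat J" "P ** J = Omega_mat" "transpose P = P"
    using PJ by (auto simp: compatible_structure_def euclidean_form_def)
  have "J *v cconj b = - \<i> *s cconj b"
    using J(1) b by (simp add: cconj_real_matrix_vector_mult[symmetric] cconj_smult)
  then have "Omega_mat *v cconj b = - \<i> *s (P *v cconj b)"
    by (simp add: J(2)[symmetric] matrix_vector_mul_assoc[symmetric] matrix_vector_mult_smult
        matrix_vector_mult_minus_right)
  then have "herm b b = vdot b (P *v cconj b)"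
    by (simp add: herm_def omega_eq_vdot vdot_smult_right vdot_minus_right)
  also have "\<dots> = vdot (P *v cconj b) b"
    by (rule vdot_commute)
  also have "\<dots> = qform P b"
    by (simp add: qform_def vdot_matrix J(3))
  finally show ?thesis .
qed

text \<open>Write \<open>v = a + b\<close> with \<open>a\<close>, \<open>b\<close> in the \<open>-i\<close>- and \<open>i\<close>-eigenspaces of \<open>J\<close>. Then
  \<open>exp (s i J) v = e\<^sup>s a + e\<^sup>-\<^sup>s b\<close>, and \<open>h\<close> is positive definite on the \<open>i\<close>-eigenspace, so
  \<open>h\<close> of this vector is positive for \<open>s \<rightarrow> -\<infinity>\<close> unless \<open>b = 0\<close>.\<close>

lemma eigenvector_if_herm_nonpos:
  assumes PJ: "compatible_structure P J"
    and nonpos: "\<And>s. Re (herm (mexp (s *\<^sub>R imag_mat J) *v v) (mexp (s *\<^sub>R imag_mat J) *v v)) \<le> 0"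
  shows "J *v v = - \<i> *s v"
proof -
  have J: "J ** J = - mat 1" "euclidean_form P"
    using PJ by (auto simp: compatible_structure_def)
  define a where "a = (1/2) *\<^sub>R (v + \<i> *s (J *v v))"
  define b where "b = (1/2) *\<^sub>R (v - \<i> *s (J *v v))"
  have JJv: "J *v (J *v v) = - v"
    by (simp add: matrix_vector_mul_assoc J(1) matrix_vector_mult_minus)
  have "J *v b = \<i> *s b"
    unfolding b_def
    by (simp add: scaleR_eq_smult matrix_vector_mult_diff_distrib matrix_vector_mult_smult JJv)
  then have hb: "herm b b = qform P b"
    using herm_eq_qform_of_eigenvector[OF PJ] by blast
  have Ev: "mexp (s *\<^sub>R imag_mat J) *v v = exp s *\<^sub>R a + exp (- s) *\<^sub>R b" for s
    unfolding mexp_scaleR_involution[OF imag_mat_squared[OF J(1)]] a_def b_def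
    by (simp add: matrix_vector_mult_add_rdistrib matrix_vector_mult_diff_rdistrib
        scaleR_matrix_vector_mult imag_mat_vector_mult)
  have "b = 0"
  proof (rule ccontr)
    assume "b \<noteq> 0"
    then have "Re (herm b b) > 0"
      using J(2) hb by (simp add: euclidean_form_def pos_def_def)
    then obtain s where
      "exp s * exp s * Re (herm a a) + Re (herm a b + herm b a) + exp (- s) * exp (- s) * Re (herm b b) > 0"
      by (rule exists_exp_quadratic_pos)
    moreover have "exp s * exp (- s) = 1" by (simp add: exp_minus)
    ultimately show False
      using nonpos[of s] unfolding Ev herm_scaleR_add_expand by simp
  qed
  then have "v = \<i> *s (J *v v)"
    unfolding b_def by (simp add: vec_eq_iff)
  then show ?thesis
    by (simp add: vec_eq_iff)
qed

lemma omega_eigenvectors_zero: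
  assumes "symplectic J" "J *v v = - \<i> *s v" "J *v u = - \<i> *s u"
  shows "omega v u = 0"
proof -
  have "omega (J *v v) (J *v u) = omega v u"
    using assms(1) by (simp add: symplectic_iff_preserves_omega)
  moreover have "omega (J *v v) (J *v u) = - omega v u"
    using assms(2,3) by (simp add: omega_minus_left omega_minus_right omega_smult_left omega_smult_right)
  ultimately show ?thesis by simp
qed

lemma act_fst: "fst (act g z) = (*v) g ` fst z"
  by (simp add: act_def)

lemma act_mult: "act (a ** b) z = act a (act b z)"
  by (simp add: act_def image_image matrix_vector_mul_assoc)

lemma act_mat1: "act (mat 1) z = z"
  by (simp add: act_def)

lemma herm_nonpos_complexification_orbit:
  assumes K: "K \<subseteq> SpR" and orbits: "orbit (complexification K) z0 = orbit K z0"
    and nonpos: "\<And>x. x \<in> fst z0 \<Longrightarrow> Re (herm x x) \<le> 0"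
    and E: "E \<in> complexification K" and v: "v \<in> fst z0"
  shows "Re (herm (E *v v) (E *v v)) \<le> 0"
proof -
  have "act E z0 \<in> orbit K z0"
    using E orbits unfolding orbit_def by blast
  then obtain k where "k \<in> K" "act E z0 = act k z0"
    unfolding orbit_def by blast
  then obtain v' where "v' \<in> fst z0" "E *v v = k *v v'"
    using v by (metis act_fst imageE image_eqI)
  moreover have "k \<in> SpR" using K \<open>k \<in> K\<close> by blast
  ultimately show ?thesis
    using herm_SpR nonpos by metis
qed

lemma base_cycle_eigenvectors:
  assumes PJ: "compatible_structure P J"
    and C0: "base_cycle (SpR_centralizer J) (Ddom m a) C0" and "z \<in> C0" "x \<in> fst z"
  shows "J *v x = - \<i> *s x"
proof -
  obtain z0 where z0: "z0 \<in> Ddom m a" and C0_eq: "C0 = orbit (SpR_centralizer J) z0"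
    and orbits: "orbit (complexification (SpR_centralizer J)) z0 = orbit (SpR_centralizer J) z0"
    using C0 unfolding base_cycle_def by blast
  have nonpos: "Re (herm v v) \<le> 0" if "v \<in> fst z0" for v
    using z0 that herm_signature_nonpos by (auto simp: Ddom_def)
  have J: "real_mat J" "symplectic J" "J ** J = - mat 1"
    using PJ by (auto simp: compatible_structure_def)
  have eigen: "J *v v = - \<i> *s v" if "v \<in> fst z0" for v
    using eigenvector_if_herm_nonpos[OF PJ] herm_nonpos_complexification_orbit[OF
        SpR_centralizer_subset orbits nonpos mexp_imag_mem_complexification[OF J] that] by blast
  obtain k where k: "k \<in> SpR_centralizer J" and "z = act k z0"
    using \<open>z \<in> C0\<close> C0_eq unfolding orbit_def by blast
  then obtain v where v: "v \<in> fst z0" and "x = k *v v"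
    using \<open>x \<in> fst z\<close> by (auto simp: act_fst)
  then have "J *v x = k *v (J *v v)"
    using k by (simp add: SpR_centralizer_def matrix_vector_mul_assoc)
  then show ?thesis
    using eigen[OF v] \<open>x = k *v v\<close>
    by (simp add: matrix_vector_mult_smult matrix_vector_mult_minus_right)
qed

text \<open>All \<open>V\<^sub>1\<close> along the base cycle lie in one \<open>\<omega>\<close>-isotropic eigenspace of \<open>J\<close>.\<close>

theorem base_cycle_omega_orthogonal:
  assumes "max_compact_subgroup K0" "base_cycle K0 (Ddom m a) C0"
    and "z \<in> C0" "z' \<in> C0" "x \<in> fst z" "y \<in> fst z'"
  shows "omega x y = 0"
proof -
  obtain P J where PJ: "compatible_structure P J" and K0: "K0 = SpR_centralizer J"
    using max_compact_subgroup_eq_centralizer[OF assms(1)] by blast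
  show ?thesis
    using omega_eigenvectors_zero base_cycle_eigenvectors[OF PJ] assms(2-6) PJ K0
    by (metis compatible_structure_def)
qed

section \<open>Transvections and the open orbit\<close>

lemma isotropy_orbit_omega_orthogonal:
  assumes z': "z' \<in> orbit (isotropy z) w" and e: "e \<in> orbit (isotropy z) w"
    and orth: "\<And>x y. x \<in> fst z \<Longrightarrow> y \<in> fst z' \<Longrightarrow> omega x y = 0"
    and "x \<in> fst z" "y \<in> fst e"
  shows "omega x y = 0"
proof -
  obtain q0 q where q0: "symplectic q0" "act q0 z = z" "z' = act q0 w"
    and q: "symplectic q" "act q z = z" "e = act q w"
    using z' e by (auto simp: orbit_def isotropy_def SpC_iff)
  define r where "r = q ** matrix_inv q0"
  have i: "invertible q0" using q0(1) symplectic_invertible by blast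
  have r: "symplectic r"
    unfolding r_def using q(1) symplectic_inv[OF q0(1)] symplectic_mult by blast
  have "act (matrix_inv q0) z = act (matrix_inv q0 ** q0) z"
    using q0(2) by (simp add: act_mult)
  then have "act r z = z"
    by (simp add: r_def act_mult q(2) matrix_inv_left[OF i] act_mat1)
  then have "x \<in> (*v) r ` fst z"
    using \<open>x \<in> fst z\<close> act_fst[of r z] by simp
  moreover have "act r z' = act q (act (matrix_inv q0 ** q0) w)"
    by (simp add: r_def q0(3) act_mult)
  then have "y \<in> (*v) r ` fst z'"
    using \<open>y \<in> fst e\<close> act_fst[of r z'] by (simp add: q(3) matrix_inv_left[OF i] act_mat1)
  ultimately show ?thesis
    using r orth by (auto simp: symplectic_iff_preserves_omega)
qed

definition omega_rank_one :: "'n::finite cvec \<Rightarrow> 'n cmat" where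
  "omega_rank_one u = (\<chi> i j. u $ i * (transpose Omega_mat *v u) $ j)"

lemma omega_rank_one_apply: "omega_rank_one u *v v = omega u v *s u"
proof -
  define r where "r = transpose Omega_mat *v u"
  have "vdot r v = omega u v"
    unfolding r_def by (simp only: vdot_matrix transpose_transpose omega_eq_vdot)
  moreover have "(omega_rank_one u *v v) $ i = u $ i * vdot r v" for i
    unfolding omega_rank_one_def r_def[symmetric]
    by (simp add: vdot_def matrix_vector_mult_def sum_distrib_left mult.assoc)
  ultimately show ?thesis by (simp add: vec_eq_iff mult.commute)
qed

definition transvection :: "real \<Rightarrow> 'n::finite cvec \<Rightarrow> 'n cmat" where
  "transvection t u = mat 1 + t *\<^sub>R omega_rank_one u"

lemma transvection_apply: "transvection t u *v v = v + (of_real t * omega u v) *s u"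
  by (simp add: transvection_def matrix_vector_mult_add_rdistrib scaleR_matrix_vector_mult
      omega_rank_one_apply scaleR_eq_smult)

lemma transvection_SpC: "transvection t u \<in> SpC"
  unfolding SpC_iff symplectic_iff_preserves_omega
proof (intro allI)
  fix v w
  have "omega u u = 0" "omega v u = - omega u v" "omega w u = - omega u w"
    by (rule omega_self omega_antisym)+
  then show "omega (transvection t u *v v) (transvection t u *v w) = omega v w"
    by (simp add: transvection_apply omega_add_left omega_add_right omega_smult_left
        omega_smult_right algebra_simps)
qed

lemma transvection_tendsto_mat1:
  "((\<lambda>t. transvection t u) \<longlongrightarrow> mat 1) (at_right 0)"
  unfolding transvection_def
  by (intro tendsto_eq_intros) (auto intro: tendsto_ident_at)

lemma openZ_transvection:
  assumes "openZ m U" "z \<in> U"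
  obtains t where "t > 0" "act (transvection t u) z \<in> U"
proof -
  have "openin (top_of_set SpC) {g \<in> SpC. act g z \<in> U}"
    using assms unfolding openZ_def by blast
  moreover have "mat 1 \<in> {g \<in> SpC. act g z \<in> U}"
    using assms(2) by (simp add: act_mat1 SpC_iff symplectic_mat1)
  ultimately obtain e where "e > 0" and e: "\<And>g. g \<in> SpC \<Longrightarrow> dist g (mat 1) < e \<Longrightarrow> act g z \<in> U"
    unfolding openin_euclidean_subtopology_iff by blast
  then have "\<forall>\<^sub>F t in at_right 0. t > 0 \<and> dist (transvection t u) (mat 1) < e"
    using transvection_tendsto_mat1[of u] by (auto simp: tendsto_iff eventually_at_right_less
        intro: eventually_conj)
  then obtain t where "t > 0" "dist (transvection t u) (mat 1) < e"
    using eventually_happens' trivial_limit_at_right_real by blast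
  then show thesis
    using that e transvection_SpC by blast
qed

lemma omega_exists_nonorthogonal:
  assumes "y \<noteq> 0"
  obtains u where "omega u y \<noteq> 0"
proof -
  obtain k where k: "y $ k \<noteq> 0" using assms by (auto simp: vec_eq_iff)
  have omega_axis: "omega (axis i 1) y = (Omega_mat *v y) $ i" for i
    by (simp add: omega_eq_vdot vdot_axis)
  show thesis
  proof (cases k)
    case (Inl a)
    then show thesis using k that[of "axis (Inr a) 1"] by (simp add: omega_axis Omega_mat_apply)
  next
    case (Inr a)
    then show thesis using k that[of "axis (Inl a) 1"] by (simp add: omega_axis Omega_mat_apply)
  qed
qed

lemma omega_exists_nonorthogonal_both:
  assumes "x \<noteq> 0" "y \<noteq> 0"
  obtains u where "omega u y \<noteq> 0" "omega x u \<noteq> 0"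
proof -
  obtain u1 u2 where u1: "omega u1 y \<noteq> 0" and "omega u2 x \<noteq> 0"
    using omega_exists_nonorthogonal assms by metis
  then have u2: "omega x u2 \<noteq> 0" using omega_antisym[of x u2] by simp
  consider "omega x u1 \<noteq> 0" | "omega u2 y \<noteq> 0" | "omega x u1 = 0" "omega u2 y = 0"
    by blast
  then show thesis
  proof cases
    case 3
    then have "omega (u1 + u2) y \<noteq> 0" "omega x (u1 + u2) \<noteq> 0"
      using u1 u2 by (simp_all add: omega_add_left omega_add_right)
    then show thesis by (rule that)
  qed (use u1 u2 that in blast)+
qed

lemma base_cycle_fst_nonzero:
  assumes "max_compact_subgroup K0" "base_cycle K0 (Ddom m a) C0" "0 < m" "z \<in> C0"
  obtains x where "x \<in> fst z" "x \<noteq> 0"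
proof -
  obtain z0 k where z0: "z0 \<in> Ddom m a" and k: "k \<in> K0" and z: "z = act k z0"
    using assms(2,4) unfolding base_cycle_def orbit_def by blast
  have "cdim (fst z0) = m" using z0 by (auto simp: Ddom_def Zflag_def)
  then obtain v where v: "v \<in> fst z0" "v \<noteq> 0"
    using assms(3) vec.dim_eq_0[of "fst z0"] by (auto simp: cdim_def)
  have "invertible k"
    using assms(1) k by (auto simp: max_compact_subgroup_def matgroup_def)
  then have "k *v v \<noteq> 0"
    using v(2) inj_matrix_vector_mult by (metis injD matrix_vector_mult_0_right)
  then show thesis using that[of "k *v v"] v(1) z by (simp add: act_fst)
qed

theorem proposition3p3:
  fixes m a :: nat
  assumes "0 < m" and "m \<le> a" and "a < CARD('n::finite)"
  shows "\<not> generically_1_connected m (Ddom m a :: 'n flag set)"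
proof
  assume "generically_1_connected m (Ddom m a :: 'n flag set)"
  then obtain K0 C0 z w z' where K0: "max_compact_subgroup K0"
    and C0: "base_cycle K0 (Ddom m a :: 'n flag set) C0" and "z \<in> C0" "z' \<in> C0"
    and O: "openZ m (orbit (isotropy z) w)" "z' \<in> orbit (isotropy z) w"
    unfolding generically_1_connected_def by blast
  have orth: "omega x y = 0" if "x \<in> fst z" "y \<in> fst z'" for x y
    using base_cycle_omega_orthogonal[OF K0 C0 \<open>z \<in> C0\<close> \<open>z' \<in> C0\<close> that] .
  obtain x y where "x \<in> fst z" "x \<noteq> 0" "y \<in> fst z'" "y \<noteq> 0"
    using base_cycle_fst_nonzero[OF K0 C0 assms(1)] \<open>z \<in> C0\<close> \<open>z' \<in> C0\<close> by metis
  then obtain u where u: "omega u y \<noteq> 0" "omega x u \<noteq> 0"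
    using omega_exists_nonorthogonal_both by metis
  obtain t where "t > 0" "act (transvection t u) z' \<in> orbit (isotropy z) w"
    using openZ_transvection[OF O] .
  then have "omega x (transvection t u *v y) = 0"
    using isotropy_orbit_omega_orthogonal[OF O(2) _ orth] \<open>x \<in> fst z\<close> \<open>y \<in> fst z'\<close>
    by (simp add: act_fst)
  moreover have "omega x (transvection t u *v y) = of_real t * omega u y * omega x u"
    using orth[OF \<open>x \<in> fst z\<close> \<open>y \<in> fst z'\<close>]
    by (simp add: transvection_apply omega_add_right omega_smult_right)
  ultimately show False
    using \<open>t > 0\<close> u by simp
qed

end
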